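(* Let $n\ge1$, let $B_1,\dots,B_n$ be independent real-valued service times with finite means $\mu_i$ and variances, let $\omega\in(0,1)$, and assume $B_1\le_{\mathrm{dil}}\cdots\le_{\mathrm{dil}}B_n$. Suppose $X_i:=B_i-\mu_i$ has a density $f_i$. Set $g_i(x)=\min\{f_i(x),f_i(-x)\}$, $h_i=f_i-g_i$, $p_i=\int_{\mathbb R}h_i(x)\,dx$. Let $(A_i,J_i)$, $i=1,\dots,n$, be independent across $i$, where $A_i$ has density $h_i/p_i$ (if $p_i>0$), $J_i$ is Bernoulli with $\mathbb P(J_i=1)=p_i$, and $A_i,J_i$ are independent (with $A_iJ_i:=0$ if $p_i=0$). Then $$\varrho_\omega\le 2+2\max\Bigl\{\frac{\mathbb E|A_1J_1+\cdots+A_kJ_k|}{\mathbb E|X_1+\cdots+X_k|}:k=1,\dots,n\Bigr\},$$ where $\varrho_\omega=C(\mathrm{Id},\boldsymbol\mu,\omega)/\min_{\tau\in\mathsf S_n}C(\tau,\boldsymbol\mu,\omega)$.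
   Context: Appointment model: a sequence is a permutation $\tau\in\mathsf S_n$ of $\{1,\dots,n\}$, $\tau(i)$ being the patient in appointment slot $i$. A schedule is a vector $\boldsymbol x=(x_1,\dots,x_n)$, where $x_j$ is the interarrival time between patient $j$ and the next patient. Waiting times $W_i$ and idle times $I_i$ of slot $i$ are given by $W_1=I_1=0$ and $W_{i+1}=(W_i+B_{\tau(i)}-x_{\tau(i)})^+$, $I_{i+1}=(W_i+B_{\tau(i)}-x_{\tau(i)})^-$, where $a^+=\max\{0,a\}$, $a^-=\max\{0,-a\}$. The cost is $C(\tau,\boldsymbol x,\omega)=\omega\sum_{i=1}^n\mathbb E I_i+(1-\omega)\sum_{i=1}^n\mathbb E W_i$. The mean-based schedule is $\boldsymbol\mu=(\mu_1,\dots,\mu_n)$, and $\mathrm{Id}$ is the identity permutation. $A\le_{\mathrm{cx}}B$ means $\mathbb E\phi(A)\le\mathbb E\phi(B)$ for all convex $\phi$ for which the expectations exist; $A\le_{\mathrm{dil}}B$ means $A-\mathbb EA\le_{\mathrm{cx}}B-\mathbb EB$. *)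

theory Defs
  imports "HOL-Probability.Probability"
begin

text \<open>Waiting time of slot i (slots numbered 1..n). Given sequence tau
  (tau i = patient in slot i), realized service times b (b j = service time of
  patient j) and schedule x (x j = interarrival time after patient j):
  W_1 = 0, W_(i+1) = (W_i + b (tau i) - x (tau i))^+.\<close>
fun wait :: "(nat \<Rightarrow> nat) \<Rightarrow> (nat \<Rightarrow> real) \<Rightarrow> (nat \<Rightarrow> real) \<Rightarrow> nat \<Rightarrow> real" where
  "wait \<tau> b x 0 = 0"
| "wait \<tau> b x (Suc 0) = 0"
| "wait \<tau> b x (Suc (Suc i)) =
     max 0 (wait \<tau> b x (Suc i) + b (\<tau> (Suc i)) - x (\<tau> (Suc i)))"

fun idle :: "(nat \<Rightarrow> nat) \<Rightarrow> (nat \<Rightarrow> real) \<Rightarrow> (nat \<Rightarrow> real) \<Rightarrow> nat \<Rightarrow> real" where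
  "idle \<tau> b x 0 = 0"
| "idle \<tau> b x (Suc 0) = 0"
| "idle \<tau> b x (Suc (Suc i)) =
     max 0 (- (wait \<tau> b x (Suc i) + b (\<tau> (Suc i)) - x (\<tau> (Suc i))))"

definition cost :: "'a measure \<Rightarrow> (nat \<Rightarrow> 'a \<Rightarrow> real) \<Rightarrow> nat \<Rightarrow> (nat \<Rightarrow> nat)
    \<Rightarrow> (nat \<Rightarrow> real) \<Rightarrow> real \<Rightarrow> real" where
  "cost M B n \<tau> x \<omega> =
     \<omega> * (\<Sum>i=1..n. \<integral>s. idle \<tau> (\<lambda>j. B j s) x i \<partial>M)
     + (1 - \<omega>) * (\<Sum>i=1..n. \<integral>s. wait \<tau> (\<lambda>j. B j s) x i \<partial>M)"

definition cx_le :: "'a measure \<Rightarrow> ('a \<Rightarrow> real) \<Rightarrow> 'b measure \<Rightarrow> ('b \<Rightarrow> real) \<Rightarrow> bool" where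
  "cx_le M X N Y \<longleftrightarrow>
     (\<forall>\<phi>::real \<Rightarrow> real. convex_on UNIV \<phi> \<longrightarrow>
        integrable M (\<lambda>s. \<phi> (X s)) \<longrightarrow> integrable N (\<lambda>s. \<phi> (Y s)) \<longrightarrow>
        (\<integral>s. \<phi> (X s) \<partial>M) \<le> (\<integral>s. \<phi> (Y s) \<partial>N))"

definition dil_le :: "'a measure \<Rightarrow> ('a \<Rightarrow> real) \<Rightarrow> 'b measure \<Rightarrow> ('b \<Rightarrow> real) \<Rightarrow> bool" where
  "dil_le M X N Y \<longleftrightarrow>
     cx_le M (\<lambda>s. X s - (\<integral>t. X t \<partial>M)) N (\<lambda>s. Y s - (\<integral>t. Y t \<partial>N))"

end

theory Submission
  imports Defs
begin

(*
  By telescoping the idle times, C(tau, mu, omega) = omega E W_n + (1 - omega) (E W_1 + ... + E W_n),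
  so it suffices to compare expected waiting times slot by slot.

  Lower bound, for any sequence tau: W_(m+1) dominates the positive part of the sum of the first m
  centred service times, which has mean zero, so E W_(m+1) >= E|X_tau(1) + ... + X_tau(m)| / 2.
  Since t |-> E|t + S| is convex for every S independent of the X_i, the dilation order makes
  exchanging a later index for an earlier one never increase E|.|, so this is at least
  E|X_1 + ... + X_m| / 2.

  Upper bound, for the identity: couple X_i with a copy U_i of A_i J_i. With probability 1 - p_i
  draw X_i = Z_i from the symmetric part g_i / (1 - p_i) and set U_i = 0; otherwise draw A, A'
  independently from h_i / p_i and set X_i = A, U_i = A', Z_i = A - A'. Then X_i = Z_i + U_i, each
  Z_i is symmetric, and by Jensen (E A' = 0) Z_i dominates X_i for every test function t |-> E|t + R|.
  Unrolling the Lindley recursion from the first patient, symmetry of the remaining sum of Z's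
  allows dropping the positive part, and domination allows replacing X_i by Z_i, so
  E W_(m+1) <= E|Z_1 + ... + Z_m| <= E|X_1 + ... + X_m| + E|U_1 + ... + U_m|.

  As E|U_1 + ... + U_m| <= R E|X_1 + ... + X_m| for the maximal ratio R of the theorem, the two
  bounds give E W_k <= (2 + 2 R) E W_k^tau for the identity against every tau, slot by slot.
*)

section \<open>Waiting times and the Lindley recursion\<close>

(* lindley x w a m is the waiting time after m further slots with increments x a, ..., x (a + m - 1),
   starting from waiting time w. Unlike wait, it peels increments off the front. *)
fun lindley :: "(nat \<Rightarrow> real) \<Rightarrow> real \<Rightarrow> nat \<Rightarrow> nat \<Rightarrow> real" where
  "lindley x w a 0 = w"
| "lindley x w a (Suc m) = lindley x (max 0 (w + x a)) (Suc a) m"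

lemma lindley_cong:
  "(\<And>i. a \<le> i \<Longrightarrow> i < a + m \<Longrightarrow> x i = x' i) \<Longrightarrow> lindley x w a m = lindley x' w a m"
  by (induction m arbitrary: w a) auto

lemma lindley_Suc_last: "lindley x w a (Suc m) = max 0 (lindley x w a m + x (a + m))"
  by (induction m arbitrary: w a) simp_all

lemma borel_measurable_lindley[measurable]:
  assumes "\<And>i. a \<le> i \<Longrightarrow> i < a + m \<Longrightarrow> x i \<in> borel_measurable K"
    and "W \<in> borel_measurable K"
  shows "(\<lambda>k. lindley (\<lambda>i. x i k) (W k) a m) \<in> borel_measurable K"
  using assms by (induction m arbitrary: W a) auto

lemma wait_nonneg: "0 \<le> wait \<tau> b x k"
  by (induction \<tau> b x k rule: wait.induct) auto

lemma idle_nonneg: "0 \<le> idle \<tau> b x k"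
  by (induction \<tau> b x k rule: idle.induct) auto

lemma wait_id_eq_lindley: "wait id b x (Suc m) = lindley (\<lambda>i. b i - x i) 0 1 m"
proof (induction m)
  case (Suc m)
  then show ?case by (subst lindley_Suc_last) (simp add: id_def)
qed simp

lemma sum_le_wait: "(\<Sum>i=1..m. b (\<tau> i) - x (\<tau> i)) \<le> wait \<tau> b x (Suc m)"
  by (induction m) auto

lemma wait_le_sum_abs: "wait \<tau> b x (Suc m) \<le> (\<Sum>i=1..m. \<bar>b (\<tau> i) - x (\<tau> i)\<bar>)"
proof (induction m)
  case (Suc m)
  then show ?case
    using wait_nonneg[of \<tau> b x "Suc m"] by (auto simp del: wait.simps(2))
qed simp

lemma borel_measurable_wait:
  assumes "\<And>i. 0 < i \<Longrightarrow> i < k \<Longrightarrow> (\<lambda>s. b s (\<tau> i)) \<in> borel_measurable K"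
  shows "(\<lambda>s. wait \<tau> (b s) x k) \<in> borel_measurable K"
  using assms
proof (induction k)
  case (Suc k)
  then show ?case by (cases k) auto
qed simp

section \<open>Absolute moments and the convex order\<close>

lemma abs_le_nn_integral_abs_add_centred:
  assumes "prob_space Q" and Z: "integrable Q Z" and "(\<integral>x. Z x \<partial>Q) = 0"
  shows "ennreal \<bar>t\<bar> \<le> (\<integral>\<^sup>+x. ennreal \<bar>t + Z x\<bar> \<partial>Q)"
proof -
  interpret Q: prob_space Q by fact
  have "(\<integral>x. t + Z x \<partial>Q) = t"
    using assms by (simp add: Q.prob_space)
  then have "ennreal \<bar>t\<bar> = ennreal (norm (\<integral>x. t + Z x \<partial>Q))" by simp
  also have "\<dots> \<le> (\<integral>\<^sup>+x. ennreal (norm (t + Z x)) \<partial>Q)"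
    using Z by (intro integral_norm_bound_ennreal) simp
  finally show ?thesis by simp
qed

lemma nn_integral_abs_le_nn_integral_abs_shift:
  assumes H: "prob_space H" "integrable H (\<lambda>b. b)" "(\<integral>b. b \<partial>H) = 0"
    and P: "sigma_finite_measure P" and [measurable]: "R \<in> borel_measurable P"
  shows "(\<integral>\<^sup>+x. ennreal \<bar>a + R x\<bar> \<partial>P) \<le> (\<integral>\<^sup>+b. \<integral>\<^sup>+x. ennreal \<bar>a - b + R x\<bar> \<partial>P \<partial>H)"
proof -
  interpret PH: pair_sigma_finite P H
    by (intro pair_sigma_finite.intro P prob_space_imp_sigma_finite H(1))
  have [measurable]: "(\<lambda>b. b) \<in> borel_measurable H"
    using H(2) by (rule borel_measurable_integrable)
  have "integrable H (\<lambda>b. - b)" "(\<integral>b. - b \<partial>H) = 0"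
    using H by simp_all
  then have "(\<integral>\<^sup>+x. ennreal \<bar>a + R x\<bar> \<partial>P) \<le> (\<integral>\<^sup>+x. \<integral>\<^sup>+b. ennreal \<bar>(a + R x) + - b\<bar> \<partial>H \<partial>P)"
    by (intro nn_integral_mono abs_le_nn_integral_abs_add_centred H(1))
  also have "\<dots> = (\<integral>\<^sup>+b. \<integral>\<^sup>+x. ennreal \<bar>a - b + R x\<bar> \<partial>P \<partial>H)"
    by (subst PH.Fubini') (simp_all add: algebra_simps)
  finally show ?thesis .
qed

lemma nn_integral_abs_diff_le:
  fixes X U :: "'a \<Rightarrow> real"
  assumes [measurable]: "X \<in> borel_measurable K" "U \<in> borel_measurable K"
  shows "(\<integral>\<^sup>+w. ennreal \<bar>X w - U w\<bar> \<partial>K) \<le> (\<integral>\<^sup>+w. ennreal \<bar>X w\<bar> \<partial>K) + (\<integral>\<^sup>+w. ennreal \<bar>U w\<bar> \<partial>K)"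
proof -
  have "(\<integral>\<^sup>+w. ennreal \<bar>X w - U w\<bar> \<partial>K) \<le> (\<integral>\<^sup>+w. ennreal \<bar>X w\<bar> + ennreal \<bar>U w\<bar> \<partial>K)"
    by (intro nn_integral_mono) (simp flip: ennreal_plus)
  also have "\<dots> = (\<integral>\<^sup>+w. ennreal \<bar>X w\<bar> \<partial>K) + (\<integral>\<^sup>+w. ennreal \<bar>U w\<bar> \<partial>K)"
    by (rule nn_integral_add) simp_all
  finally show ?thesis .
qed

lemma nn_integral_abs_max0_add_le:
  assumes [measurable]: "S \<in> borel_measurable Q"
    and sym: "(\<integral>\<^sup>+x. ennreal \<bar>c + S x\<bar> \<partial>Q) = (\<integral>\<^sup>+x. ennreal \<bar>c - S x\<bar> \<partial>Q)"
  shows "(\<integral>\<^sup>+x. ennreal \<bar>max 0 c + S x\<bar> \<partial>Q) \<le> (\<integral>\<^sup>+x. ennreal \<bar>c + S x\<bar> \<partial>Q)"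
proof (cases "0 \<le> c")
  case False
  have "2 * (\<integral>\<^sup>+x. ennreal \<bar>S x\<bar> \<partial>Q) = (\<integral>\<^sup>+x. ennreal (2 * \<bar>S x\<bar>) \<partial>Q)"
    by (simp add: nn_integral_cmult ennreal_mult)
  also have "\<dots> \<le> (\<integral>\<^sup>+x. ennreal \<bar>c + S x\<bar> + ennreal \<bar>c - S x\<bar> \<partial>Q)"
    by (intro nn_integral_mono) (simp flip: ennreal_plus)
  also have "\<dots> = 2 * (\<integral>\<^sup>+x. ennreal \<bar>c + S x\<bar> \<partial>Q)"
    by (simp add: nn_integral_add sym flip: mult_2)
  finally show ?thesis
    using False by (simp add: ennreal_mult_le_mult_iff)
qed simp

lemma convex_on_UNIV_borel_measurable:
  fixes \<phi> :: "real \<Rightarrow> real"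
  assumes "convex_on UNIV \<phi>"
  shows "\<phi> \<in> borel_measurable borel"
  using convex_on_continuous[OF open_UNIV assms] by (rule borel_measurable_continuous_onI)

lemma convex_on_integral_abs_add:
  assumes "prob_space Q" and S: "integrable Q S"
  shows "convex_on UNIV (\<lambda>t. \<integral>x. \<bar>t + S x\<bar> \<partial>Q)"
proof (rule convex_onI)
  interpret Q: prob_space Q by fact
  fix u a b :: real assume u: "0 < u" "u < 1"
  have "(\<integral>x. \<bar>(1 - u) *\<^sub>R a + u *\<^sub>R b + S x\<bar> \<partial>Q)
      = (\<integral>x. \<bar>(1 - u) * (a + S x) + u * (b + S x)\<bar> \<partial>Q)"
    by (simp add: algebra_simps)
  also have "\<dots> \<le> (\<integral>x. (1 - u) * \<bar>a + S x\<bar> + u * \<bar>b + S x\<bar> \<partial>Q)"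
  proof (rule integral_mono)
    fix x
    have "\<bar>(1 - u) * (a + S x) + u * (b + S x)\<bar> \<le> \<bar>(1 - u) * (a + S x)\<bar> + \<bar>u * (b + S x)\<bar>"
      by (rule abs_triangle_ineq)
    then show "\<bar>(1 - u) * (a + S x) + u * (b + S x)\<bar> \<le> (1 - u) * \<bar>a + S x\<bar> + u * \<bar>b + S x\<bar>"
      using u by (simp add: abs_mult)
  qed (use S in auto)
  also have "\<dots> = (1 - u) * (\<integral>x. \<bar>a + S x\<bar> \<partial>Q) + u * (\<integral>x. \<bar>b + S x\<bar> \<partial>Q)"
    using S by simp
  finally show "(\<integral>x. \<bar>(1 - u) *\<^sub>R a + u *\<^sub>R b + S x\<bar> \<partial>Q)
      \<le> (1 - u) * (\<integral>x. \<bar>a + S x\<bar> \<partial>Q) + u * (\<integral>x. \<bar>b + S x\<bar> \<partial>Q)" .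
qed simp

lemma integrable_integral_abs_add:
  fixes V :: "'a \<Rightarrow> real" and S :: "'b \<Rightarrow> real"
  assumes "prob_space P" "integrable P S" "prob_space K" "integrable K V"
  shows "integrable K (\<lambda>y. \<integral>x. \<bar>V y + S x\<bar> \<partial>P)"
proof (rule Bochner_Integration.integrable_bound)
  interpret P: prob_space P by fact
  interpret K: prob_space K by fact
  show "integrable K (\<lambda>y. \<bar>V y\<bar> + (\<integral>x. \<bar>S x\<bar> \<partial>P))"
    using assms(4) by simp
  show "(\<lambda>y. \<integral>x. \<bar>V y + S x\<bar> \<partial>P) \<in> borel_measurable K"
    using convex_on_UNIV_borel_measurable[OF convex_on_integral_abs_add[OF assms(1,2)]]
      borel_measurable_integrable[OF assms(4)] by (rule measurable_compose[rotated])
  have "(\<integral>x. \<bar>t + S x\<bar> \<partial>P) \<le> (\<integral>x. \<bar>t\<bar> + \<bar>S x\<bar> \<partial>P)" for t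
    using assms(2) by (intro integral_mono) auto
  then show "AE y in K. norm (\<integral>x. \<bar>V y + S x\<bar> \<partial>P) \<le> norm (\<bar>V y\<bar> + (\<integral>x. \<bar>S x\<bar> \<partial>P))"
    using assms(2) by (intro AE_I2) (simp add: P.prob_space)
qed

lemma convex_on_comp_distr:
  fixes \<phi> :: "real \<Rightarrow> real"
  assumes \<phi>: "convex_on UNIV \<phi>" and [measurable]: "Z \<in> borel_measurable K"
  shows "integrable K (\<lambda>s. \<phi> (Z s)) \<longleftrightarrow> integrable (distr K borel Z) \<phi>"
    and "(\<integral>s. \<phi> (Z s) \<partial>K) = (\<integral>x. \<phi> x \<partial>distr K borel Z)"
  using convex_on_UNIV_borel_measurable[OF \<phi>] by (simp_all add: integrable_distr_eq integral_distr)

lemma cx_le_cong_distr: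
  assumes "X \<in> borel_measurable M" "X' \<in> borel_measurable M'"
    "Y \<in> borel_measurable N" "Y' \<in> borel_measurable N'"
    and "distr M borel X = distr M' borel X'" and "distr N borel Y = distr N' borel Y'"
  shows "cx_le M X N Y \<longleftrightarrow> cx_le M' X' N' Y'"
  using assms by (auto simp: cx_le_def convex_on_comp_distr)

lemma integral_mono_cx_chain:
  assumes "j \<le> m"
    and cx: "\<And>i. j \<le> i \<Longrightarrow> i < m \<Longrightarrow> cx_le (M i) (X i) (M (Suc i)) (X (Suc i))"
    and \<phi>: "convex_on UNIV \<phi>"
    and int: "\<And>i. j \<le> i \<Longrightarrow> i \<le> m \<Longrightarrow> integrable (M i) (\<lambda>s. \<phi> (X i s))"
  shows "(\<integral>s. \<phi> (X j s) \<partial>M j) \<le> (\<integral>s. \<phi> (X m s) \<partial>M m)"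
  using assms(1)
proof (induction m rule: dec_induct)
  case (step k)
  note step.IH
  also have "(\<integral>s. \<phi> (X k s) \<partial>M k) \<le> (\<integral>s. \<phi> (X (Suc k) s) \<partial>M (Suc k))"
    using cx[of k] \<phi> int[of k] int[of "Suc k"] step.hyps unfolding cx_le_def by simp
  finally show ?case .
qed simp

lemma emeasure_distr_eq_nn_integral:
  assumes "T \<in> measurable K K'" and "S \<in> sets K'"
  shows "emeasure (distr K K' T) S = (\<integral>\<^sup>+w. indicator S (T w) \<partial>K)"
proof -
  have "emeasure (distr K K' T) S = (\<integral>\<^sup>+w. indicator (T -` S \<inter> space K) w \<partial>K)"
    using assms by (simp add: emeasure_distr measurable_sets)
  also have "\<dots> = (\<integral>\<^sup>+w. indicator S (T w) \<partial>K)"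
    by (intro nn_integral_cong) (simp split: split_indicator)
  finally show ?thesis .
qed

lemma divide_Min_le:
  fixes C :: "'a \<Rightarrow> real"
  assumes "finite P" "P \<noteq> {}" and "0 \<le> c"
    and C: "\<And>\<tau>. \<tau> \<in> P \<Longrightarrow> 0 \<le> C \<tau> \<and> x \<le> c * C \<tau>"
  shows "x / Min (C ` P) \<le> c"
proof -
  have "Min (C ` P) \<in> C ` P"
    using assms(1,2) by simp
  then obtain \<tau> where "\<tau> \<in> P" and min: "Min (C ` P) = C \<tau>"
    by auto
  then show ?thesis
    using C[of \<tau>] \<open>0 \<le> c\<close> by (cases "C \<tau> = 0") (auto simp: divide_le_eq)
qed

section \<open>Normalised densities\<close>

(* The law with density proportional to k; the point mass at 0 whenever k is not a nonnegative
   integrable function of positive mass, so that density_law k is a probability measure for every k. *)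
definition density_law :: "(real \<Rightarrow> real) \<Rightarrow> real measure" where
  "density_law k =
     (if k \<in> borel_measurable borel \<and> (\<forall>x. 0 \<le> k x) \<and> integrable lborel k \<and> (\<integral>x. k x \<partial>lborel) \<noteq> 0
      then density lborel (\<lambda>x. ennreal (k x / (\<integral>x. k x \<partial>lborel))) else return borel 0)"

lemma density_law_cases:
  obtains (proper) "k \<in> borel_measurable borel" "\<And>x. 0 \<le> k x" "integrable lborel k"
      "0 < (\<integral>x. k x \<partial>lborel)"
      "density_law k = density lborel (\<lambda>x. ennreal (k x / (\<integral>x. k x \<partial>lborel)))"
  | (degenerate) "density_law k = return borel 0"
proof (cases "k \<in> borel_measurable borel \<and> (\<forall>x. 0 \<le> k x) \<and> integrable lborel k \<and> (\<integral>x. k x \<partial>lborel) \<noteq> 0")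
  case True
  then have "0 < (\<integral>x. k x \<partial>lborel)"
    using integral_nonneg_AE[of k lborel] by (auto simp: less_le)
  with True show ?thesis
    using proper by (simp add: density_law_def)
next
  case False
  show ?thesis
    by (rule degenerate) (simp only: density_law_def if_not_P[OF False])
qed

lemma sets_density_law[simp, measurable_cong]: "sets (density_law k) = sets borel"
  by (simp add: density_law_def)

lemma prob_space_density_law: "prob_space (density_law k)"
proof (cases k rule: density_law_cases)
  case proper
  then have "(\<integral>\<^sup>+x. ennreal (k x / (\<integral>x. k x \<partial>lborel)) \<partial>lborel) = 1"
    by (subst nn_integral_eq_integral) auto
  with proper show ?thesis
    by (auto intro!: prob_spaceI simp: emeasure_density)
qed (simp add: prob_space_return)

lemma nn_integral_density_law:
  assumes [measurable]: "k \<in> borel_measurable borel" "F \<in> borel_measurable borel"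
    and k: "\<And>x. 0 \<le> k x" "integrable lborel k"
  shows "ennreal (\<integral>x. k x \<partial>lborel) * (\<integral>\<^sup>+y. F y \<partial>density_law k) = (\<integral>\<^sup>+x. ennreal (k x) * F x \<partial>lborel)"
proof (cases "(\<integral>x. k x \<partial>lborel) = 0")
  case False
  let ?c = "\<integral>x. k x \<partial>lborel"
  have "0 < ?c"
    using False k integral_nonneg_AE[of k lborel] by (auto simp: less_le)
  have "ennreal ?c * (\<integral>\<^sup>+y. F y \<partial>density_law k)
      = (\<integral>\<^sup>+x. ennreal ?c * (ennreal (k x / ?c) * F x) \<partial>lborel)"
    using False k by (simp add: density_law_def nn_integral_density nn_integral_cmult)
  also have "\<dots> = (\<integral>\<^sup>+x. ennreal (k x) * F x \<partial>lborel)"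
    using \<open>0 < ?c\<close> k by (intro nn_integral_cong) (simp add: mult.assoc[symmetric] ennreal_mult[symmetric])
  finally show ?thesis .
next
  case True
  then have "AE x in lborel. k x = 0"
    using k by (subst integral_nonneg_eq_0_iff_AE[symmetric]) auto
  then have "(\<integral>\<^sup>+x. ennreal (k x) * F x \<partial>lborel) = 0"
    by (subst nn_integral_0_iff_AE) (auto elim: eventually_mono)
  with True show ?thesis by simp
qed

lemma density_law_centred:
  assumes [measurable]: "k \<in> borel_measurable borel"
    and "integrable lborel (\<lambda>x. k x * x)" "(\<integral>x. k x * x \<partial>lborel) = 0"
  shows "integrable (density_law k) (\<lambda>x. x) \<and> (\<integral>x. x \<partial>density_law k) = 0"
proof (cases k rule: density_law_cases)
  case proper
  let ?c = "\<integral>x. k x \<partial>lborel"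
  have "integrable lborel (\<lambda>x. k x * x / ?c)" "(\<integral>x. k x * x / ?c \<partial>lborel) = 0"
    using assms by simp_all
  with proper show ?thesis
    by (simp add: integrable_density integral_density)
qed (simp add: integrable_iff_bounded nn_integral_return integral_return)

lemma nn_integral_density_law_uminus:
  assumes k: "\<And>x. k (- x) = k x" and [measurable]: "F \<in> borel_measurable borel"
  shows "(\<integral>\<^sup>+y. F (- y) \<partial>density_law k) = (\<integral>\<^sup>+y. F y \<partial>density_law k)"
proof (cases k rule: density_law_cases)
  case proper
  let ?q = "\<lambda>x. ennreal (k x / (\<integral>x. k x \<partial>lborel))"
  have "(\<integral>\<^sup>+x. ?q x * F (- x) \<partial>lborel) = ennreal \<bar>-1\<bar> * (\<integral>\<^sup>+x. ?q (0 + -1 * x) * F (- (0 + -1 * x)) \<partial>lborel)"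
    using proper by (intro nn_integral_real_affine) auto
  with proper show ?thesis
    by (simp add: nn_integral_density k)
qed (simp add: nn_integral_return)

section \<open>Products of a family of probability spaces\<close>

lemma sum_fun_upd_notin: "a \<notin> I \<Longrightarrow> (\<Sum>i\<in>I. Z (if i = a then y else x i)) = (\<Sum>i\<in>I. Z (x i))"
  by (rule sum.cong) auto

lemma borel_measurable_sum_components[measurable]:
  fixes Z :: "'a \<Rightarrow> real"
  assumes "L \<subseteq> I" and [measurable]: "Z \<in> borel_measurable S"
  shows "(\<lambda>\<omega>. \<Sum>l\<in>L. Z (\<omega> l)) \<in> borel_measurable (PiM I (\<lambda>_. S))"
proof (rule borel_measurable_sum)
  fix l assume "l \<in> L"
  with assms(1) have "l \<in> I" by auto
  then show "(\<lambda>\<omega>. Z (\<omega> l)) \<in> borel_measurable (PiM I (\<lambda>_. S))"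
    by measurable
qed

locale prob_family =
  fixes Q :: "nat \<Rightarrow> 'a measure" and S :: "'a measure"
  assumes prob_space_Q: "\<And>i. prob_space (Q i)"
    and sets_Q: "\<And>i. sets (Q i) = sets S"
begin

declare sets_Q[measurable_cong]

sublocale product_prob_space Q
  by (rule product_prob_spaceI) (rule prob_space_Q)

lemma sets_PiM_Q[measurable_cong]: "sets (PiM I Q) = sets (PiM I (\<lambda>_. S))"
  by (rule sets_PiM_cong) (simp_all add: sets_Q)

lemma prob_space_PiM_Q: "prob_space (PiM I Q)"
  by (rule prob_space_PiM[OF prob_space_Q])

lemma sigma_finite_PiM_Q: "sigma_finite_measure (PiM I Q)"
  by (rule prob_space_imp_sigma_finite[OF prob_space_PiM_Q])

lemma pair_sigma_finite_PiM_Q: "pair_sigma_finite (PiM I Q) (Q a)"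
  unfolding pair_sigma_finite_def
  using sigma_finite_PiM_Q prob_space_imp_sigma_finite[OF prob_space_Q] by auto

lemma nn_integral_PiM_insert:
  assumes "finite I" "a \<notin> I" and "F \<in> borel_measurable (PiM (insert a I) (\<lambda>_. S))"
  shows "(\<integral>\<^sup>+\<omega>. F \<omega> \<partial>PiM (insert a I) Q) = (\<integral>\<^sup>+y. \<integral>\<^sup>+x. F (x(a := y)) \<partial>PiM I Q \<partial>Q a)"
  using assms by (intro product_nn_integral_insert_rev) simp_all

lemma nn_integral_sum_uminus_PiM:
  fixes Z :: "'a \<Rightarrow> real"
  assumes "finite I" and [measurable]: "Z \<in> borel_measurable S"
    and sym: "\<And>i F. i \<in> I \<Longrightarrow> F \<in> borel_measurable borel \<Longrightarrow>
      (\<integral>\<^sup>+y. F (Z y) \<partial>Q i) = (\<integral>\<^sup>+y. F (- Z y) \<partial>Q i)"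
    and "F \<in> borel_measurable borel"
  shows "(\<integral>\<^sup>+\<omega>. F (\<Sum>i\<in>I. Z (\<omega> i)) \<partial>PiM I Q) = (\<integral>\<^sup>+\<omega>. F (- (\<Sum>i\<in>I. Z (\<omega> i))) \<partial>PiM I Q)"
  using assms(1,3,4)
proof (induction I arbitrary: F rule: finite_induct)
  case (insert a I)
  note [measurable] = insert.prems(2)
  interpret P: pair_sigma_finite "PiM I Q" "Q a" by (rule pair_sigma_finite_PiM_Q)
  let ?S = "\<lambda>x. \<Sum>i\<in>I. Z (x i)"
  have "(\<integral>\<^sup>+\<omega>. F (\<Sum>i\<in>insert a I. Z (\<omega> i)) \<partial>PiM (insert a I) Q)
      = (\<integral>\<^sup>+y. \<integral>\<^sup>+x. F (Z y + ?S x) \<partial>PiM I Q \<partial>Q a)"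
    using insert.hyps by (subst nn_integral_PiM_insert) (simp_all add: sum_fun_upd_notin)
  also have "\<dots> = (\<integral>\<^sup>+y. \<integral>\<^sup>+x. F (Z y - ?S x) \<partial>PiM I Q \<partial>Q a)"
  proof (rule nn_integral_cong)
    fix y
    show "(\<integral>\<^sup>+x. F (Z y + ?S x) \<partial>PiM I Q) = (\<integral>\<^sup>+x. F (Z y - ?S x) \<partial>PiM I Q)"
      using insert.IH[of "\<lambda>t. F (Z y + t)"] insert.prems by simp
  qed
  also have "\<dots> = (\<integral>\<^sup>+x. \<integral>\<^sup>+y. F (Z y - ?S x) \<partial>Q a \<partial>PiM I Q)"
    by (rule P.Fubini') simp
  also have "\<dots> = (\<integral>\<^sup>+x. \<integral>\<^sup>+y. F (- Z y - ?S x) \<partial>Q a \<partial>PiM I Q)"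
  proof (rule nn_integral_cong)
    fix x
    show "(\<integral>\<^sup>+y. F (Z y - ?S x) \<partial>Q a) = (\<integral>\<^sup>+y. F (- Z y - ?S x) \<partial>Q a)"
      using insert.prems(1)[of a "\<lambda>t. F (t - ?S x)"] by simp
  qed
  also have "\<dots> = (\<integral>\<^sup>+y. \<integral>\<^sup>+x. F (- Z y - ?S x) \<partial>PiM I Q \<partial>Q a)"
    by (rule P.Fubini'[symmetric]) simp
  also have "\<dots> = (\<integral>\<^sup>+\<omega>. F (- (\<Sum>i\<in>insert a I. Z (\<omega> i))) \<partial>PiM (insert a I) Q)"
    using insert.hyps by (subst nn_integral_PiM_insert) (simp_all add: sum_fun_upd_notin)
  finally show ?case .
qed simp

lemma nn_integral_indep_vars_eq_PiM:
  fixes Y :: "nat \<Rightarrow> 'b \<Rightarrow> real" and T :: "'a \<Rightarrow> real"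
  assumes K: "prob_space K" and I: "finite I" "I \<noteq> {}"
    and indep: "prob_space.indep_vars K (\<lambda>_. borel) Y I"
    and Y: "\<And>i. i \<in> I \<Longrightarrow> Y i \<in> borel_measurable K"
    and law: "\<And>i. i \<in> I \<Longrightarrow> distr (Q i) borel T = distr K borel (Y i)"
    and [measurable]: "T \<in> borel_measurable S" "F \<in> borel_measurable (PiM I (\<lambda>_. borel))"
  shows "(\<integral>\<^sup>+s. F (\<lambda>i\<in>I. Y i s) \<partial>K) = (\<integral>\<^sup>+\<omega>. F (\<lambda>i\<in>I. T (\<omega> i)) \<partial>PiM I Q)"
proof -
  interpret K: prob_space K by (rule K)
  define L where "L i = distr (Q i) borel T" for i
  have sets_L: "sets (L i) = sets borel" for i by (simp add: L_def)
  have joint_Y: "distr K (PiM I (\<lambda>_. borel)) (\<lambda>s. \<lambda>i\<in>I. Y i s) = PiM I L"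
    using K.indep_vars_iff_distr_eq_PiM'[OF I(2) Y] indep law by (simp add: L_def cong: PiM_cong)
  have "distr (PiM I Q) (PiM I (\<lambda>_. borel)) (compose I T) = distr (PiM I Q) (PiM I L) (compose I T)"
    by (rule distr_cong) (auto intro!: sets_PiM_cong simp: sets_L)
  also have "\<dots> = PiM I (\<lambda>i. distr (Q i) (L i) T)"
    by (rule distr_PiM_finite_prob_space'[OF I(1) prob_space_Q])
       (simp_all add: L_def prob_space.prob_space_distr[OF prob_space_Q] measurable_cong_sets[OF refl sets_L])
  also have "\<dots> = PiM I L"
    by (intro PiM_cong refl) (simp add: L_def distr_cong[OF refl refl sets_L] cong: distr_cong)
  finally have joint_T: "distr (PiM I Q) (PiM I (\<lambda>_. borel)) (compose I T) = PiM I L" .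
  have "(\<integral>\<^sup>+s. F (\<lambda>i\<in>I. Y i s) \<partial>K) = (\<integral>\<^sup>+v. F v \<partial>PiM I L)"
    using Y by (simp add: joint_Y[symmetric] nn_integral_distr measurable_restrict)
  also have "\<dots> = (\<integral>\<^sup>+\<omega>. F (compose I T \<omega>) \<partial>PiM I Q)"
  proof -
    have "compose I T \<in> measurable (PiM I Q) (PiM I (\<lambda>_. borel))"
      unfolding compose_def by simp
    then show ?thesis
      by (simp add: joint_T[symmetric] nn_integral_distr)
  qed
  finally show ?thesis by (simp add: compose_def)
qed

lemma nn_integral_sum_indep_vars_eq_PiM:
  fixes Y :: "nat \<Rightarrow> 'b \<Rightarrow> real" and T :: "'a \<Rightarrow> real" and G :: "real \<Rightarrow> ennreal"
  assumes "prob_space K" "finite I" "I \<noteq> {}" "prob_space.indep_vars K (\<lambda>_. borel) Y I"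
    and "\<And>i. i \<in> I \<Longrightarrow> Y i \<in> borel_measurable K"
    and "\<And>i. i \<in> I \<Longrightarrow> distr (Q i) borel T = distr K borel (Y i)"
    and "T \<in> borel_measurable S" and L: "L \<subseteq> I" and [measurable]: "G \<in> borel_measurable borel"
  shows "(\<integral>\<^sup>+s. G (\<Sum>l\<in>L. Y l s) \<partial>K) = (\<integral>\<^sup>+\<omega>. G (\<Sum>l\<in>L. T (\<omega> l)) \<partial>PiM I Q)"
proof -
  have "(\<lambda>v. G (\<Sum>l\<in>L. v l)) \<in> borel_measurable (PiM I (\<lambda>_. borel))"
    using borel_measurable_sum_components[OF L, of "\<lambda>x. x" borel] by simp
  from nn_integral_indep_vars_eq_PiM[OF assms(1-7) this] show ?thesis
    using L by (simp add: subset_iff cong: sum.cong)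
qed

lemma
  fixes V :: "'a \<Rightarrow> real"
  assumes L: "L \<subseteq> I" and [measurable]: "V \<in> borel_measurable S"
    and V: "\<And>l. l \<in> L \<Longrightarrow> integrable (Q l) V"
  shows integrable_sum_components_PiM: "integrable (PiM I Q) (\<lambda>\<omega>. \<Sum>l\<in>L. V (\<omega> l))"
    and integral_sum_components_PiM: "(\<integral>\<omega>. (\<Sum>l\<in>L. V (\<omega> l)) \<partial>PiM I Q) = (\<Sum>l\<in>L. \<integral>y. V y \<partial>Q l)"
proof -
  have "integrable (PiM I Q) (\<lambda>\<omega>. V (\<omega> l)) \<and> (\<integral>\<omega>. V (\<omega> l) \<partial>PiM I Q) = (\<integral>y. V y \<partial>Q l)"
    if l: "l \<in> L" for l
  proof -
    have comp: "(\<lambda>\<omega>. \<omega> l) \<in> PiM I Q \<rightarrow>\<^sub>M Q l"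
      using l L by (intro measurable_component_singleton) auto
    have "distr (PiM I Q) (Q l) (\<lambda>\<omega>. \<omega> l) = Q l"
      using l L by (intro distr_PiM_component prob_space_Q) auto
    then show ?thesis
      using integrable_distr_eq[OF comp, of V] integral_distr[OF comp, of V] V[OF l] by simp
  qed
  then show "integrable (PiM I Q) (\<lambda>\<omega>. \<Sum>l\<in>L. V (\<omega> l))"
    and "(\<integral>\<omega>. (\<Sum>l\<in>L. V (\<omega> l)) \<partial>PiM I Q) = (\<Sum>l\<in>L. \<integral>y. V y \<partial>Q l)"
    by (auto simp: integral_sum)
qed

lemma nn_integral_PiM_component_add_sum:
  fixes V :: "'a \<Rightarrow> real" and G :: "real \<Rightarrow> ennreal"
  assumes L: "finite L" "L \<subseteq> I" and i: "i \<in> I" "i \<notin> L"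
    and [measurable]: "V \<in> borel_measurable S" "G \<in> borel_measurable borel"
  shows "(\<integral>\<^sup>+\<omega>. G (V (\<omega> i) + (\<Sum>l\<in>L. V (\<omega> l))) \<partial>PiM I Q)
       = (\<integral>\<^sup>+y. \<integral>\<^sup>+x. G (V y + (\<Sum>l\<in>L. V (x l))) \<partial>PiM L Q \<partial>Q i)"
proof -
  let ?G = "\<lambda>\<omega>. G (V (\<omega> i) + (\<Sum>l\<in>L. V (\<omega> l)))"
  have restrict: "(\<lambda>\<omega>. restrict \<omega> (insert i L)) \<in> PiM I Q \<rightarrow>\<^sub>M PiM (insert i L) Q"
    using L i by (intro measurable_restrict_subset) auto
  have "(\<integral>\<^sup>+\<omega>. ?G \<omega> \<partial>PiM I Q) = (\<integral>\<^sup>+\<omega>. ?G (restrict \<omega> (insert i L)) \<partial>PiM I Q)"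
    by (intro nn_integral_cong) (simp cong: sum.cong)
  also have "\<dots> = (\<integral>\<^sup>+\<omega>. ?G \<omega> \<partial>distr (PiM I Q) (PiM (insert i L) Q) (\<lambda>\<omega>. restrict \<omega> (insert i L)))"
    by (rule nn_integral_distr[OF restrict, symmetric]) simp
  also have "\<dots> = (\<integral>\<^sup>+\<omega>. ?G \<omega> \<partial>PiM (insert i L) Q)"
    using L i by (simp add: distr_PiM_restrict_finite)
  also have "\<dots> = (\<integral>\<^sup>+y. \<integral>\<^sup>+x. ?G (x(i := y)) \<partial>PiM L Q \<partial>Q i)"
    using L i by (intro nn_integral_PiM_insert) auto
  also have "\<dots> = (\<integral>\<^sup>+y. \<integral>\<^sup>+x. G (V y + (\<Sum>l\<in>L. V (x l))) \<partial>PiM L Q \<partial>Q i)"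
    using i by (simp add: sum_fun_upd_notin)
  finally show ?thesis .
qed

lemma nn_integral_abs_le_nn_integral_abs_add_sum:
  fixes V :: "'a \<Rightarrow> real"
  assumes L: "finite L" "L \<subseteq> I" and i: "i \<in> I" "i \<notin> L" and [measurable]: "V \<in> borel_measurable S"
    and V: "\<And>l. l \<in> L \<Longrightarrow> integrable (Q l) V" "\<And>l. l \<in> L \<Longrightarrow> (\<integral>y. V y \<partial>Q l) = 0"
  shows "(\<integral>\<^sup>+y. ennreal \<bar>V y\<bar> \<partial>Q i) \<le> (\<integral>\<^sup>+\<omega>. ennreal \<bar>V (\<omega> i) + (\<Sum>l\<in>L. V (\<omega> l))\<bar> \<partial>PiM I Q)"
proof -
  have "integrable (PiM L Q) (\<lambda>x. \<Sum>l\<in>L. V (x l))" "(\<integral>x. (\<Sum>l\<in>L. V (x l)) \<partial>PiM L Q) = 0"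
    using V by (simp_all add: integrable_sum_components_PiM integral_sum_components_PiM)
  then have "(\<integral>\<^sup>+y. ennreal \<bar>V y\<bar> \<partial>Q i)
      \<le> (\<integral>\<^sup>+y. \<integral>\<^sup>+x. ennreal \<bar>V y + (\<Sum>l\<in>L. V (x l))\<bar> \<partial>PiM L Q \<partial>Q i)"
    by (intro nn_integral_mono abs_le_nn_integral_abs_add_centred prob_space_PiM_Q)
  also have "\<dots> = (\<integral>\<^sup>+\<omega>. ennreal \<bar>V (\<omega> i) + (\<Sum>l\<in>L. V (\<omega> l))\<bar> \<partial>PiM I Q)"
    using L i by (intro nn_integral_PiM_component_add_sum[symmetric]) simp_all
  finally show ?thesis .
qed

lemma nn_integral_abs_add_sum_mono_cx:
  fixes V :: "'a \<Rightarrow> real"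
  assumes [measurable]: "V \<in> borel_measurable S"
    and int: "\<And>i. i \<in> {1..n} \<Longrightarrow> integrable (Q i) V"
    and cx: "\<And>i. i \<in> {1..<n} \<Longrightarrow> cx_le (Q i) V (Q (Suc i)) V"
    and L: "L \<subseteq> {1..n}" and j: "j \<in> {1..n} - L" and m: "m \<in> {1..n} - L" and "j \<le> m"
  shows "(\<integral>\<^sup>+\<omega>. ennreal \<bar>V (\<omega> j) + (\<Sum>l\<in>L. V (\<omega> l))\<bar> \<partial>PiM {1..n} Q)
       \<le> (\<integral>\<^sup>+\<omega>. ennreal \<bar>V (\<omega> m) + (\<Sum>l\<in>L. V (\<omega> l))\<bar> \<partial>PiM {1..n} Q)"
proof -
  interpret PL: prob_space "PiM L Q" by (rule prob_space_PiM_Q)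
  define \<phi> where "\<phi> t = (\<integral>x. \<bar>t + (\<Sum>l\<in>L. V (x l))\<bar> \<partial>PiM L Q)" for t
  have fin: "finite L" using L finite_subset by blast
  have intS: "integrable (PiM L Q) (\<lambda>x. \<Sum>l\<in>L. V (x l))"
    using L int by (intro integrable_sum_components_PiM) auto
  have \<phi>_cvx: "convex_on UNIV \<phi>"
    unfolding \<phi>_def[abs_def] by (rule convex_on_integral_abs_add[OF prob_space_PiM_Q intS])
  have \<phi>_int: "integrable (Q i) (\<lambda>y. \<phi> (V y))" if "i \<in> {1..n}" for i
    unfolding \<phi>_def by (rule integrable_integral_abs_add[OF prob_space_PiM_Q intS prob_space_Q int[OF that]])
  have eq: "(\<integral>\<^sup>+\<omega>. ennreal \<bar>V (\<omega> i) + (\<Sum>l\<in>L. V (\<omega> l))\<bar> \<partial>PiM {1..n} Q) = ennreal (\<integral>y. \<phi> (V y) \<partial>Q i)"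
    if i: "i \<in> {1..n} - L" for i
  proof -
    have "(\<integral>\<^sup>+\<omega>. ennreal \<bar>V (\<omega> i) + (\<Sum>l\<in>L. V (\<omega> l))\<bar> \<partial>PiM {1..n} Q)
        = (\<integral>\<^sup>+y. \<integral>\<^sup>+x. ennreal \<bar>V y + (\<Sum>l\<in>L. V (x l))\<bar> \<partial>PiM L Q \<partial>Q i)"
      using fin L i by (intro nn_integral_PiM_component_add_sum) auto
    also have "\<dots> = (\<integral>\<^sup>+y. ennreal (\<phi> (V y)) \<partial>Q i)"
      unfolding \<phi>_def using intS by (intro nn_integral_cong nn_integral_eq_integral) auto
    also have "\<dots> = ennreal (\<integral>y. \<phi> (V y) \<partial>Q i)"
      using \<phi>_int i by (intro nn_integral_eq_integral) (auto simp: \<phi>_def)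
    finally show ?thesis .
  qed
  have "(\<integral>y. \<phi> (V y) \<partial>Q j) \<le> (\<integral>y. \<phi> (V y) \<partial>Q m)"
  proof (rule integral_mono_cx_chain[where M=Q and X="\<lambda>_. V", OF \<open>j \<le> m\<close> _ \<phi>_cvx])
    fix i
    show "cx_le (Q i) V (Q (Suc i)) V" if "j \<le> i" "i < m"
      using that j m by (intro cx) auto
    show "integrable (Q i) (\<lambda>y. \<phi> (V y))" if "j \<le> i" "i \<le> m"
      using that j m by (intro \<phi>_int) auto
  qed
  then show ?thesis
    using eq[OF j] eq[OF m] by (simp add: ennreal_leI)
qed

lemma nn_integral_abs_sum_initial_le:
  fixes V :: "'a \<Rightarrow> real"
  assumes [measurable]: "V \<in> borel_measurable S"
    and int: "\<And>i. i \<in> {1..n} \<Longrightarrow> integrable (Q i) V"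
    and cx: "\<And>i. i \<in> {1..<n} \<Longrightarrow> cx_le (Q i) V (Q (Suc i)) V"
    and "L \<subseteq> {1..n}"
  shows "(\<integral>\<^sup>+\<omega>. ennreal \<bar>\<Sum>l\<in>{1..card L}. V (\<omega> l)\<bar> \<partial>PiM {1..n} Q)
       \<le> (\<integral>\<^sup>+\<omega>. ennreal \<bar>\<Sum>l\<in>L. V (\<omega> l)\<bar> \<partial>PiM {1..n} Q)"
  using \<open>L \<subseteq> {1..n}\<close>
proof (induction "\<Sum>L" arbitrary: L rule: less_induct)
  case less
  let ?E = "\<lambda>L. \<integral>\<^sup>+\<omega>. ennreal \<bar>\<Sum>l\<in>L. V (\<omega> l)\<bar> \<partial>PiM {1..n} Q"
  have fin: "finite L" using less.prems finite_subset by blast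
  show ?case
  proof (cases "L = {1..card L}")
    case True
    then show ?thesis by (metis order.refl)
  next
    case False
    have "\<not> L \<subseteq> {1..card L}" and "\<not> {1..card L} \<subseteq> L"
      using False fin card_subset_eq[of "{1..card L}" L] card_subset_eq[of L "{1..card L}"] by auto
    then obtain m j where m: "m \<in> L" "card L < m" and j: "j \<in> {1..card L}" "j \<notin> L"
      using less.prems by (metis atLeastAtMost_iff not_le subsetD subsetI)
    define L' where "L' = L - {m}"
    have L': "finite L'" "L' \<subseteq> {1..n}" "m \<notin> L'" "j \<notin> L'" "L = insert m L'"
      using fin less.prems m j by (auto simp: L'_def)
    have "card L \<le> n"
      using card_mono[OF _ less.prems] by simp
    then have jm: "j \<in> {1..n} - L'" "m \<in> {1..n} - L'" "j \<le> m"
      using j m L' less.prems by auto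
    have "\<Sum>(insert j L') < \<Sum>L" "card (insert j L') = card L"
      using L' j m by simp_all
    then have "?E {1..card L} \<le> ?E (insert j L')"
      using less.hyps[of "insert j L'"] L' jm by simp
    also have "\<dots> \<le> ?E L"
      using nn_integral_abs_add_sum_mono_cx[OF _ int cx L'(2) jm] L' by simp
    finally show ?thesis .
  qed
qed

end

section \<open>The coupling\<close>

(* A point (y, a, b, j): y from the symmetric part g_i, a and b independent draws from the rest h_i,
   and the Bernoulli (p_i) switch j. *)
abbreviation coupling_space :: "(real \<times> real \<times> real \<times> bool) measure" where
  "coupling_space \<equiv> borel \<Otimes>\<^sub>M (borel \<Otimes>\<^sub>M (borel \<Otimes>\<^sub>M count_space UNIV))"

definition coupled_X :: "real \<times> real \<times> real \<times> bool \<Rightarrow> real" where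
  "coupled_X = (\<lambda>(y, a, b, j). if j then a else y)"

definition coupled_U :: "real \<times> real \<times> real \<times> bool \<Rightarrow> real" where
  "coupled_U = (\<lambda>(y, a, b, j). if j then b else 0)"

definition coupled_Z :: "real \<times> real \<times> real \<times> bool \<Rightarrow> real" where
  "coupled_Z = (\<lambda>(y, a, b, j). if j then a - b else y)"

lemma coupled_simps[simp]:
  "coupled_X (y, a, b, j) = (if j then a else y)"
  "coupled_U (y, a, b, j) = (if j then b else 0)"
  "coupled_Z (y, a, b, j) = (if j then a - b else y)"
  by (simp_all add: coupled_X_def coupled_U_def coupled_Z_def)

lemma measurable_coupled[measurable]:
  "coupled_X \<in> borel_measurable coupling_space"
  "coupled_U \<in> borel_measurable coupling_space"
  "coupled_Z \<in> borel_measurable coupling_space"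
  unfolding coupled_X_def coupled_U_def coupled_Z_def by measurable

lemma coupled_Z_eq: "coupled_Z w = coupled_X w - coupled_U w"
  by (cases w) simp

(* The hypotheses of the theorem, except the finite second moments, which the proof does not use. *)
locale appointment_model = M: prob_space M + N: prob_space N
  for M :: "'a measure" and N :: "'b measure" +
  fixes B :: "nat \<Rightarrow> 'a \<Rightarrow> real" and n :: nat and \<omega> :: real
    and \<mu> :: "nat \<Rightarrow> real" and f g h :: "nat \<Rightarrow> real \<Rightarrow> real" and p :: "nat \<Rightarrow> real"
    and A J :: "nat \<Rightarrow> 'b \<Rightarrow> real"
  assumes n_ge_1: "n \<ge> 1"
    and B_rv: "\<And>i. i \<in> {1..n} \<Longrightarrow> B i \<in> borel_measurable M"
    and B_indep: "M.indep_vars (\<lambda>_. borel) B {1..n}"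
    and B_mean: "\<And>i. i \<in> {1..n} \<Longrightarrow> integrable M (B i)"
    and \<mu>_def: "\<And>i. \<mu> i = (\<integral>s. B i s \<partial>M)"
    and \<omega>: "0 < \<omega>" "\<omega> < 1"
    and dil: "\<And>i. i \<in> {1..<n} \<Longrightarrow> dil_le M (B i) M (B (Suc i))"
    and f_nonneg: "\<And>i x. i \<in> {1..n} \<Longrightarrow> 0 \<le> f i x"
    and f_meas: "\<And>i. i \<in> {1..n} \<Longrightarrow> f i \<in> borel_measurable borel"
    and f_dens: "\<And>i. i \<in> {1..n} \<Longrightarrow>
        distributed M lborel (\<lambda>s. B i s - \<mu> i) (\<lambda>x. ennreal (f i x))"
    and g_def: "\<And>i x. g i x = min (f i x) (f i (- x))"
    and h_def: "\<And>i x. h i x = f i x - g i x"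
    and p_def: "\<And>i. p i = (\<integral>x. h i x \<partial>lborel)"
    and AJ_rv: "\<And>i. i \<in> {1..n} \<Longrightarrow> A i \<in> borel_measurable N \<and> J i \<in> borel_measurable N"
    and AJ_indep: "N.indep_vars (\<lambda>_. borel) (\<lambda>i s. (A i s, J i s)) {1..n}"
    and A_J_indep: "\<And>i. i \<in> {1..n} \<Longrightarrow> N.indep_var borel (A i) borel (J i)"
    and A_dens: "\<And>i. i \<in> {1..n} \<Longrightarrow> p i > 0 \<Longrightarrow>
        distributed N lborel (A i) (\<lambda>x. ennreal (h i x / p i))"
    and J_bern: "\<And>i. i \<in> {1..n} \<Longrightarrow> (AE s in N. J i s = 0 \<or> J i s = 1)"
    and J_prob: "\<And>i. i \<in> {1..n} \<Longrightarrow> measure N {s \<in> space N. J i s = 1} = p i"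
begin

definition X :: "nat \<Rightarrow> 'a \<Rightarrow> real" where
  "X i s = B i s - \<mu> i"

lemma measurable_X[measurable]: "i \<in> {1..n} \<Longrightarrow> X i \<in> borel_measurable M"
  unfolding X_def using B_rv by measurable

lemma integrable_X: "i \<in> {1..n} \<Longrightarrow> integrable M (X i)"
  unfolding X_def using B_mean by auto

lemma integral_X: "i \<in> {1..n} \<Longrightarrow> (\<integral>s. X i s \<partial>M) = 0"
  unfolding X_def using B_mean by (simp add: \<mu>_def M.prob_space)

lemma distributed_X: "i \<in> {1..n} \<Longrightarrow> distributed M lborel (X i) (\<lambda>x. ennreal (f i x))"
  using f_dens by (simp add: X_def[abs_def])

lemma distr_X: "i \<in> {1..n} \<Longrightarrow> distr M borel (X i) = density lborel (\<lambda>x. ennreal (f i x))"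
  using distributed_X[unfolded distributed_def] by (auto cong: distr_cong)

lemma borel_measurable_f[measurable]: "i \<in> {1..n} \<Longrightarrow> f i \<in> borel_measurable borel"
  by (rule f_meas)

lemma
  assumes i: "i \<in> {1..n}"
  shows nn_integral_f: "(\<integral>\<^sup>+x. ennreal (f i x) \<partial>lborel) = 1"
    and integrable_f: "integrable lborel (f i)"
    and integral_f: "(\<integral>x. f i x \<partial>lborel) = 1"
    and integrable_f_mult: "integrable lborel (\<lambda>x. f i x * x)"
    and integral_f_mult: "(\<integral>x. f i x * x \<partial>lborel) = 0"
  using distributed_nn_integral[OF distributed_X[OF i], of "\<lambda>_. 1"]
    distributed_integrable[OF distributed_X[OF i], of "\<lambda>_. 1"]
    distributed_integral[OF distributed_X[OF i], of "\<lambda>_. 1"]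
    distributed_integrable[OF distributed_X[OF i], of "\<lambda>x. x"]
    distributed_integral[OF distributed_X[OF i], of "\<lambda>x. x"]
    f_nonneg[OF i] integrable_X[OF i] integral_X[OF i]
  by (simp_all add: M.emeasure_space_1 M.prob_space)

lemma borel_measurable_g[measurable]: "i \<in> {1..n} \<Longrightarrow> g i \<in> borel_measurable borel"
  by (simp add: g_def[abs_def])

lemma borel_measurable_h[measurable]: "i \<in> {1..n} \<Longrightarrow> h i \<in> borel_measurable borel"
  by (simp add: h_def[abs_def])

lemma g_nonneg: "i \<in> {1..n} \<Longrightarrow> 0 \<le> g i x"
  by (simp add: g_def f_nonneg)

lemma h_nonneg: "0 \<le> h i x"
  by (simp add: h_def g_def)

lemma g_le_f: "g i x \<le> f i x"
  by (simp add: g_def)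

lemma h_le_f: "i \<in> {1..n} \<Longrightarrow> h i x \<le> f i x"
  by (simp add: h_def g_nonneg)

lemma g_uminus: "g i (- x) = g i x"
  by (simp add: g_def)

lemma f_eq_g_add_h: "f i x = g i x + h i x"
  by (simp add: h_def)

lemma
  assumes i: "i \<in> {1..n}"
  shows integrable_g: "integrable lborel (g i)"
    and integrable_h: "integrable lborel (h i)"
  using i by (auto intro!: Bochner_Integration.integrable_bound[OF integrable_f[OF i]]
      simp: g_nonneg h_nonneg g_le_f h_le_f f_nonneg)

lemma
  assumes i: "i \<in> {1..n}"
  shows integrable_g_mult: "integrable lborel (\<lambda>x. g i x * x)"
    and integrable_h_mult: "integrable lborel (\<lambda>x. h i x * x)"
  using i by (auto intro!: Bochner_Integration.integrable_bound[OF integrable_f_mult[OF i]] AE_I2 mult_right_mono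
      simp: g_nonneg h_nonneg g_le_f h_le_f abs_mult f_nonneg)

lemma integral_g_mult: "(\<integral>x. g i x * x \<partial>lborel) = 0"
proof -
  have "(\<integral>x. g i x * x \<partial>lborel) = \<bar>-1\<bar> *\<^sub>R (\<integral>x. g i (0 + -1 * x) * (0 + -1 * x) \<partial>lborel)"
    by (rule lborel_integral_real_affine) simp
  then show ?thesis by (simp add: g_uminus)
qed

lemma integral_h_mult: "i \<in> {1..n} \<Longrightarrow> (\<integral>x. h i x * x \<partial>lborel) = 0"
  using integrable_f_mult integrable_g_mult integral_f_mult integral_g_mult
  by (simp add: h_def left_diff_distrib)

lemma integral_g: "i \<in> {1..n} \<Longrightarrow> (\<integral>x. g i x \<partial>lborel) = 1 - p i"
  using integrable_f integrable_g integral_f by (simp add: p_def h_def)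

lemma p_nonneg: "0 \<le> p i"
  unfolding p_def by (simp add: h_nonneg)

lemma p_le_1: "i \<in> {1..n} \<Longrightarrow> p i \<le> 1"
  using integral_g[of i] integral_nonneg_AE[of "g i" lborel] by (simp add: g_nonneg)

definition coupling :: "nat \<Rightarrow> (real \<times> real \<times> real \<times> bool) measure" where
  "coupling i = density_law (g i) \<Otimes>\<^sub>M
     (density_law (h i) \<Otimes>\<^sub>M (density_law (h i) \<Otimes>\<^sub>M measure_pmf (bernoulli_pmf (p i))))"

lemma sets_coupling: "sets (coupling i) = sets coupling_space"
  unfolding coupling_def
  by (intro sets_pair_measure_cong sets_density_law sets_measure_pmf_count_space)

lemma prob_space_coupling: "prob_space (coupling i)"
  unfolding coupling_def
  by (intro prob_space_pair prob_space_density_law prob_space_measure_pmf)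

sublocale coupled: prob_family coupling coupling_space
  by (rule prob_family.intro) (simp_all add: prob_space_coupling sets_coupling)

lemma nn_integral_coupling:
  assumes i: "i \<in> {1..n}"
    and [measurable]: "(\<lambda>(a, b). Ga a b) \<in> borel_measurable (borel \<Otimes>\<^sub>M borel)" "Gy \<in> borel_measurable borel"
  shows "(\<integral>\<^sup>+(y, a, b, j). (if j then Ga a b else Gy y) \<partial>coupling i)
    = ennreal (p i) * (\<integral>\<^sup>+a. \<integral>\<^sup>+b. Ga a b \<partial>density_law (h i) \<partial>density_law (h i))
      + ennreal (1 - p i) * (\<integral>\<^sup>+y. Gy y \<partial>density_law (g i))"
proof -
  let ?G = "density_law (g i)" and ?H = "density_law (h i)" and ?J = "measure_pmf (bernoulli_pmf (p i))"
  let ?F = "\<lambda>(y, a, b, j). if j then Ga a b else Gy y"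
  interpret G: prob_space ?G by (rule prob_space_density_law)
  interpret H: prob_space ?H by (rule prob_space_density_law)
  interpret HHJ: sigma_finite_measure "?H \<Otimes>\<^sub>M (?H \<Otimes>\<^sub>M ?J)"
    by (intro prob_space_imp_sigma_finite prob_space_pair prob_space_density_law prob_space_measure_pmf)
  interpret HJ: sigma_finite_measure "?H \<Otimes>\<^sub>M ?J"
    by (intro prob_space_imp_sigma_finite prob_space_pair prob_space_density_law prob_space_measure_pmf)
  have "(\<integral>\<^sup>+w. ?F w \<partial>coupling i) = (\<integral>\<^sup>+y. \<integral>\<^sup>+r. ?F (y, r) \<partial>?H \<Otimes>\<^sub>M (?H \<Otimes>\<^sub>M ?J) \<partial>?G)"
    unfolding coupling_def by (rule HHJ.nn_integral_fst[symmetric]) measurable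
  also have "\<dots> = (\<integral>\<^sup>+y. \<integral>\<^sup>+a. \<integral>\<^sup>+r. ?F (y, a, r) \<partial>?H \<Otimes>\<^sub>M ?J \<partial>?H \<partial>?G)"
    by (intro nn_integral_cong HJ.nn_integral_fst[symmetric]) measurable
  also have "\<dots> = (\<integral>\<^sup>+y. \<integral>\<^sup>+a. \<integral>\<^sup>+b. \<integral>\<^sup>+j. ?F (y, a, b, j) \<partial>?J \<partial>?H \<partial>?H \<partial>?G)"
    by (intro nn_integral_cong measure_pmf.nn_integral_fst[symmetric]) measurable
  also have "\<dots> = (\<integral>\<^sup>+y. \<integral>\<^sup>+a. \<integral>\<^sup>+b. ennreal (p i) * Ga a b + ennreal (1 - p i) * Gy y \<partial>?H \<partial>?H \<partial>?G)"
    using p_nonneg[of i] p_le_1[OF i] by (simp add: ac_simps)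
  also have "\<dots> = ennreal (p i) * (\<integral>\<^sup>+a. \<integral>\<^sup>+b. Ga a b \<partial>?H \<partial>?H) + ennreal (1 - p i) * (\<integral>\<^sup>+y. Gy y \<partial>?G)"
    by (simp add: nn_integral_add nn_integral_cmult H.emeasure_space_1 G.emeasure_space_1)
  finally show ?thesis .
qed

lemma nn_integral_coupled_X:
  assumes i: "i \<in> {1..n}" and [measurable]: "F \<in> borel_measurable borel"
  shows "(\<integral>\<^sup>+w. F (coupled_X w) \<partial>coupling i) = (\<integral>\<^sup>+x. ennreal (f i x) * F x \<partial>lborel)"
proof -
  interpret H: prob_space "density_law (h i)" by (rule prob_space_density_law)
  have "(\<integral>\<^sup>+w. F (coupled_X w) \<partial>coupling i) = (\<integral>\<^sup>+(y, a, b, j). (if j then F a else F y) \<partial>coupling i)"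
    by (intro nn_integral_cong) (auto split: prod.split)
  also have "\<dots> = ennreal (p i) * (\<integral>\<^sup>+a. F a \<partial>density_law (h i))
      + ennreal (1 - p i) * (\<integral>\<^sup>+y. F y \<partial>density_law (g i))"
    using i by (subst nn_integral_coupling) (simp_all add: H.emeasure_space_1)
  also have "\<dots> = (\<integral>\<^sup>+x. ennreal (h i x) * F x \<partial>lborel) + (\<integral>\<^sup>+x. ennreal (g i x) * F x \<partial>lborel)"
    using i integrable_h integrable_g
    by (simp add: nn_integral_density_law[symmetric] g_nonneg h_nonneg p_def integral_g)
  also have "\<dots> = (\<integral>\<^sup>+x. ennreal (f i x) * F x \<partial>lborel)"
    using i by (subst nn_integral_add[symmetric])
      (auto intro!: nn_integral_cong simp: f_eq_g_add_h[of i] g_nonneg h_nonneg ennreal_plus distrib_right)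
  finally show ?thesis .
qed

lemma distr_coupled_X: "i \<in> {1..n} \<Longrightarrow> distr (coupling i) borel coupled_X = distr M borel (X i)"
  by (rule measure_eqI)
     (simp_all add: distr_X emeasure_distr_eq_nn_integral nn_integral_coupled_X emeasure_density mult.commute)

lemma emeasure_distr_coupled_U:
  assumes i: "i \<in> {1..n}" and S: "S \<in> sets borel"
  shows "emeasure (distr (coupling i) borel coupled_U) S
    = ennreal (p i) * emeasure (density_law (h i)) S + ennreal (1 - p i) * indicator S 0"
proof -
  interpret G: prob_space "density_law (g i)" by (rule prob_space_density_law)
  interpret H: prob_space "density_law (h i)" by (rule prob_space_density_law)
  have "emeasure (distr (coupling i) borel coupled_U) S
      = (\<integral>\<^sup>+(y, a, b, j). (if j then indicator S b else indicator S 0) \<partial>coupling i)"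
    using S by (simp add: emeasure_distr_eq_nn_integral) (auto intro!: nn_integral_cong split: prod.split)
  also have "\<dots> = ennreal (p i) * emeasure (density_law (h i)) S + ennreal (1 - p i) * indicator S 0"
    using i S by (subst nn_integral_coupling) (simp_all add: H.emeasure_space_1 G.emeasure_space_1)
  finally show ?thesis .
qed

lemma borel_measurable_A_J[measurable]:
  "i \<in> {1..n} \<Longrightarrow> A i \<in> borel_measurable N" "i \<in> {1..n} \<Longrightarrow> J i \<in> borel_measurable N"
  using AJ_rv by auto

lemma emeasure_J_eq_1: "i \<in> {1..n} \<Longrightarrow> emeasure N {s \<in> space N. J i s = 1} = ennreal (p i)"
  using J_prob by (simp add: N.emeasure_eq_measure)

lemma emeasure_A_J_eq_1:
  assumes i: "i \<in> {1..n}" and S: "S \<in> sets borel"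
  shows "emeasure N {s \<in> space N. A i s \<in> S \<and> J i s = 1} = ennreal (p i) * emeasure (density_law (h i)) S"
proof -
  interpret DJ: prob_space "distr N borel (J i)"
    using i by (intro N.prob_space_distr) simp
  have "emeasure N {s \<in> space N. A i s \<in> S \<and> J i s = 1}
      = emeasure (distr N (borel \<Otimes>\<^sub>M borel) (\<lambda>s. (A i s, J i s))) (S \<times> {1})"
    using i S by (subst emeasure_distr) (auto intro!: arg_cong[where f="emeasure N"])
  also have "\<dots> = emeasure (distr N borel (A i) \<Otimes>\<^sub>M distr N borel (J i)) (S \<times> {1})"
    using N.indep_var_distribution_eq[THEN iffD1, OF A_J_indep[OF i]] by simp
  also have "\<dots> = emeasure (distr N borel (A i)) S * emeasure (distr N borel (J i)) {1}"
    using S by (intro DJ.emeasure_pair_measure_Times) auto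
  also have "\<dots> = emeasure (distr N borel (A i)) S * ennreal (p i)"
    using i emeasure_J_eq_1[OF i] by (subst emeasure_distr) (auto simp: vimage_def Int_def conj_commute)
  also have "\<dots> = ennreal (p i) * emeasure (density_law (h i)) S"
  proof (cases "p i = 0")
    case False
    then have "distr N borel (A i) = density_law (h i)"
      using A_dens[OF i] i p_nonneg[of i] integrable_h[OF i] h_nonneg[of i]
      by (auto simp: distributed_def density_law_def p_def[symmetric] cong: distr_cong)
    then show ?thesis by (simp add: mult.commute)
  qed simp
  finally show ?thesis .
qed

lemma emeasure_distr_A_times_J:
  assumes i: "i \<in> {1..n}" and S: "S \<in> sets borel"
  shows "emeasure (distr N borel (\<lambda>s. A i s * J i s)) S
    = ennreal (p i) * emeasure (density_law (h i)) S + ennreal (1 - p i) * indicator S 0"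
proof -
  define E where "E = {s \<in> space N. J i s = 1}"
  have E[measurable]: "E \<in> sets N" using i unfolding E_def by measurable
  have "emeasure (distr N borel (\<lambda>s. A i s * J i s)) S = (\<integral>\<^sup>+s. indicator S (A i s * J i s) \<partial>N)"
    using i S by (simp add: emeasure_distr_eq_nn_integral)
  also have "\<dots> = (\<integral>\<^sup>+s. indicator {s \<in> space N. A i s \<in> S \<and> J i s = 1} s
      + indicator S 0 * indicator (space N - E) s \<partial>N)"
  proof (rule nn_integral_cong_AE)
    show "AE s in N. indicator S (A i s * J i s) = (indicator {s \<in> space N. A i s \<in> S \<and> J i s = 1} s
        + indicator S 0 * indicator (space N - E) s :: ennreal)"
      using J_bern[OF i] AE_space by eventually_elim (auto simp: E_def split: split_indicator)
  qed
  also have "\<dots> = emeasure N {s \<in> space N. A i s \<in> S \<and> J i s = 1} + indicator S 0 * emeasure N (space N - E)"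
    using i S by (subst nn_integral_add) (auto simp: nn_integral_cmult)
  also have "emeasure N (space N - E) = ennreal (1 - p i)"
    using N.prob_compl[OF E] J_prob[OF i] by (simp add: N.emeasure_eq_measure E_def)
  finally show ?thesis
    using emeasure_A_J_eq_1[OF i S] by (simp add: mult.commute)
qed

lemma distr_coupled_U: "i \<in> {1..n} \<Longrightarrow> distr (coupling i) borel coupled_U = distr N borel (\<lambda>s. A i s * J i s)"
  by (rule measure_eqI) (simp_all add: emeasure_distr_coupled_U emeasure_distr_A_times_J)

lemma nn_integral_coupled_Z_uminus:
  assumes i: "i \<in> {1..n}" and [measurable]: "F \<in> borel_measurable borel"
  shows "(\<integral>\<^sup>+w. F (coupled_Z w) \<partial>coupling i) = (\<integral>\<^sup>+w. F (- coupled_Z w) \<partial>coupling i)"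
proof -
  interpret HH: pair_sigma_finite "density_law (h i)" "density_law (h i)"
    by (intro pair_sigma_finite.intro prob_space_imp_sigma_finite prob_space_density_law)
  have "(\<integral>\<^sup>+w. F (coupled_Z w) \<partial>coupling i) = (\<integral>\<^sup>+(y, a, b, j). (if j then F (a - b) else F y) \<partial>coupling i)"
    by (intro nn_integral_cong) (auto split: prod.split)
  also have "\<dots> = ennreal (p i) * (\<integral>\<^sup>+a. \<integral>\<^sup>+b. F (a - b) \<partial>density_law (h i) \<partial>density_law (h i))
      + ennreal (1 - p i) * (\<integral>\<^sup>+y. F y \<partial>density_law (g i))"
    using i by (intro nn_integral_coupling) simp_all
  also have "(\<integral>\<^sup>+a. \<integral>\<^sup>+b. F (a - b) \<partial>density_law (h i) \<partial>density_law (h i))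
      = (\<integral>\<^sup>+a. \<integral>\<^sup>+b. F (- (a - b)) \<partial>density_law (h i) \<partial>density_law (h i))"
    by (subst HH.Fubini') simp_all
  also have "(\<integral>\<^sup>+y. F y \<partial>density_law (g i)) = (\<integral>\<^sup>+y. F (- y) \<partial>density_law (g i))"
    by (rule nn_integral_density_law_uminus[symmetric]) (simp_all add: g_uminus)
  also have "ennreal (p i) * (\<integral>\<^sup>+a. \<integral>\<^sup>+b. F (- (a - b)) \<partial>density_law (h i) \<partial>density_law (h i))
      + ennreal (1 - p i) * (\<integral>\<^sup>+y. F (- y) \<partial>density_law (g i))
      = (\<integral>\<^sup>+(y, a, b, j). (if j then F (- (a - b)) else F (- y)) \<partial>coupling i)"
    using i by (intro nn_integral_coupling[symmetric]) simp_all
  also have "\<dots> = (\<integral>\<^sup>+w. F (- coupled_Z w) \<partial>coupling i)"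
    by (intro nn_integral_cong) (auto split: prod.split)
  finally show ?thesis .
qed

lemma nn_integral_abs_coupled_X_le_Z:
  assumes i: "i \<in> {1..n}" and P: "sigma_finite_measure P" and [measurable]: "R \<in> borel_measurable P"
  shows "(\<integral>\<^sup>+w. \<integral>\<^sup>+x. ennreal \<bar>coupled_X w + R x\<bar> \<partial>P \<partial>coupling i)
       \<le> (\<integral>\<^sup>+w. \<integral>\<^sup>+x. ennreal \<bar>coupled_Z w + R x\<bar> \<partial>P \<partial>coupling i)"
proof -
  interpret P: sigma_finite_measure P by (rule P)
  interpret H: prob_space "density_law (h i)" by (rule prob_space_density_law)
  define F where "F t = (\<integral>\<^sup>+x. ennreal \<bar>t + R x\<bar> \<partial>P)" for t
  have [measurable]: "F \<in> borel_measurable borel"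
    unfolding F_def by measurable
  have jensen: "F a \<le> (\<integral>\<^sup>+b. F (a - b) \<partial>density_law (h i))" for a
    unfolding F_def using density_law_centred[of "h i"] i integrable_h_mult integral_h_mult
    by (intro nn_integral_abs_le_nn_integral_abs_shift H.prob_space_axioms P) simp_all
  have "(\<integral>\<^sup>+w. F (coupled_X w) \<partial>coupling i) = (\<integral>\<^sup>+(y, a, b, j). (if j then F a else F y) \<partial>coupling i)"
    by (intro nn_integral_cong) (auto split: prod.split)
  also have "\<dots> = ennreal (p i) * (\<integral>\<^sup>+a. \<integral>\<^sup>+b. F a \<partial>density_law (h i) \<partial>density_law (h i))
      + ennreal (1 - p i) * (\<integral>\<^sup>+y. F y \<partial>density_law (g i))"
    using i by (intro nn_integral_coupling) simp_all
  also have "\<dots> \<le> ennreal (p i) * (\<integral>\<^sup>+a. \<integral>\<^sup>+b. F (a - b) \<partial>density_law (h i) \<partial>density_law (h i))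
      + ennreal (1 - p i) * (\<integral>\<^sup>+y. F y \<partial>density_law (g i))"
  proof -
    have "(\<integral>\<^sup>+a. \<integral>\<^sup>+b. F a \<partial>density_law (h i) \<partial>density_law (h i))
        \<le> (\<integral>\<^sup>+a. \<integral>\<^sup>+b. F (a - b) \<partial>density_law (h i) \<partial>density_law (h i))"
      by (rule nn_integral_mono) (simp add: H.emeasure_space_1 jensen)
    then show ?thesis by (intro add_mono mult_left_mono) auto
  qed
  also have "\<dots> = (\<integral>\<^sup>+(y, a, b, j). (if j then F (a - b) else F y) \<partial>coupling i)"
    using i by (intro nn_integral_coupling[symmetric]) simp_all
  also have "\<dots> = (\<integral>\<^sup>+w. F (coupled_Z w) \<partial>coupling i)"
    by (intro nn_integral_cong) (auto split: prod.split)
  finally show ?thesis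
    unfolding F_def .
qed

lemma nn_integral_abs_max0_add_sum_coupled_Z_le:
  assumes "finite L" "L \<subseteq> {1..n}"
  shows "(\<integral>\<^sup>+x. ennreal \<bar>max 0 c + (\<Sum>i\<in>L. coupled_Z (x i))\<bar> \<partial>PiM L coupling)
       \<le> (\<integral>\<^sup>+x. ennreal \<bar>c + (\<Sum>i\<in>L. coupled_Z (x i))\<bar> \<partial>PiM L coupling)"
proof (rule nn_integral_abs_max0_add_le)
  show "(\<integral>\<^sup>+x. ennreal \<bar>c + (\<Sum>i\<in>L. coupled_Z (x i))\<bar> \<partial>PiM L coupling)
      = (\<integral>\<^sup>+x. ennreal \<bar>c - (\<Sum>i\<in>L. coupled_Z (x i))\<bar> \<partial>PiM L coupling)"
    using coupled.nn_integral_sum_uminus_PiM[OF assms(1), of coupled_Z "\<lambda>t. ennreal \<bar>c + t\<bar>"]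
      nn_integral_coupled_Z_uminus assms(2) by (auto simp: subset_iff)
qed simp

lemma nn_integral_lindley_le:
  assumes "{a..<a + m} \<subseteq> {1..n}" and "0 \<le> w"
  shows "(\<integral>\<^sup>+\<omega>. ennreal (lindley (\<lambda>i. coupled_X (\<omega> i)) w a m) \<partial>PiM {a..<a + m} coupling)
       \<le> (\<integral>\<^sup>+\<omega>. ennreal \<bar>w + (\<Sum>i\<in>{a..<a + m}. coupled_Z (\<omega> i))\<bar> \<partial>PiM {a..<a + m} coupling)"
  using assms
proof (induction m arbitrary: a w)
  case (Suc m)
  define L where "L = {Suc a..<Suc a + m}"
  have L: "{a..<a + Suc m} = insert a L" "a \<notin> L" "finite L" "L \<subseteq> {1..n}"
    using Suc.prems(1) by (auto simp: L_def)
  have a: "a \<in> {1..n}"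
    using subsetD[OF Suc.prems(1), of a] by simp
  interpret P: pair_sigma_finite "PiM L coupling" "coupling a"
    by (rule coupled.pair_sigma_finite_PiM_Q)
  let ?S = "\<lambda>x. \<Sum>i\<in>L. coupled_Z (x i)"
  have [measurable]: "(\<lambda>\<omega>. lindley (\<lambda>i. coupled_X (\<omega> i)) w a (Suc m))
      \<in> borel_measurable (PiM (insert a L) (\<lambda>_. coupling_space))"
    using borel_measurable_lindley[of a "Suc m" "\<lambda>i \<omega>. coupled_X (\<omega> i)" _ "\<lambda>_. w"]
    by (simp add: L(1)[symmetric])
  have "(\<integral>\<^sup>+\<omega>. ennreal (lindley (\<lambda>i. coupled_X (\<omega> i)) w a (Suc m)) \<partial>PiM (insert a L) coupling)
      = (\<integral>\<^sup>+y. \<integral>\<^sup>+x. ennreal (lindley (\<lambda>i. coupled_X (x i)) (max 0 (w + coupled_X y)) (Suc a) m)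
          \<partial>PiM L coupling \<partial>coupling a)"
  proof -
    have "lindley (\<lambda>i. coupled_X ((x(a := y)) i)) w a (Suc m)
        = lindley (\<lambda>i. coupled_X (x i)) (max 0 (w + coupled_X y)) (Suc a) m" for x y
      by simp (rule lindley_cong, simp)
    then show ?thesis
      using L by (subst coupled.nn_integral_PiM_insert) (simp_all del: lindley.simps)
  qed
  also have "\<dots> \<le> (\<integral>\<^sup>+y. \<integral>\<^sup>+x. ennreal \<bar>max 0 (w + coupled_X y) + ?S x\<bar> \<partial>PiM L coupling \<partial>coupling a)"
    using L(4) by (intro nn_integral_mono Suc.IH[of "Suc a", folded L_def]) (auto simp: L_def)
  also have "\<dots> \<le> (\<integral>\<^sup>+y. \<integral>\<^sup>+x. ennreal \<bar>coupled_X y + (w + ?S x)\<bar> \<partial>PiM L coupling \<partial>coupling a)"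
  proof (rule nn_integral_mono)
    fix y
    have "(\<integral>\<^sup>+x. ennreal \<bar>max 0 (w + coupled_X y) + ?S x\<bar> \<partial>PiM L coupling)
        \<le> (\<integral>\<^sup>+x. ennreal \<bar>(w + coupled_X y) + ?S x\<bar> \<partial>PiM L coupling)"
      by (rule nn_integral_abs_max0_add_sum_coupled_Z_le[OF L(3,4)])
    then show "(\<integral>\<^sup>+x. ennreal \<bar>max 0 (w + coupled_X y) + ?S x\<bar> \<partial>PiM L coupling)
        \<le> (\<integral>\<^sup>+x. ennreal \<bar>coupled_X y + (w + ?S x)\<bar> \<partial>PiM L coupling)"
      by (simp add: ac_simps)
  qed
  also have "\<dots> \<le> (\<integral>\<^sup>+y. \<integral>\<^sup>+x. ennreal \<bar>coupled_Z y + (w + ?S x)\<bar> \<partial>PiM L coupling \<partial>coupling a)"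
    by (rule nn_integral_abs_coupled_X_le_Z[OF a coupled.sigma_finite_PiM_Q]) simp
  also have "\<dots> = (\<integral>\<^sup>+\<omega>. ennreal \<bar>w + (\<Sum>i\<in>insert a L. coupled_Z (\<omega> i))\<bar> \<partial>PiM (insert a L) coupling)"
    using L by (subst coupled.nn_integral_PiM_insert) (auto intro!: nn_integral_cong simp: sum_fun_upd_notin ac_simps)
  finally show ?case
    unfolding L(1) .
qed simp

section \<open>Comparison of expected waiting times\<close>

lemma indep_X: "M.indep_vars (\<lambda>_. borel) X {1..n}"
  using M.indep_vars_compose2[OF B_indep, of "\<lambda>i b. b - \<mu> i" "\<lambda>_. borel"]
  by (simp add: X_def[abs_def])

lemma indep_A_times_J: "N.indep_vars (\<lambda>_. borel) (\<lambda>i s. A i s * J i s) {1..n}"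
proof -
  have "(\<lambda>(a, c). a * c :: real) \<in> borel_measurable borel"
    unfolding borel_prod[symmetric] by measurable
  then show ?thesis
    using N.indep_vars_compose2[OF AJ_indep, of "\<lambda>_ (a, c). a * c" "\<lambda>_. borel"] by simp
qed

lemma nn_integral_abs_sum_X_eq_PiM:
  assumes "L \<subseteq> I" "I \<subseteq> {1..n}" "I \<noteq> {}"
  shows "(\<integral>\<^sup>+s. ennreal \<bar>\<Sum>l\<in>L. X l s\<bar> \<partial>M) = (\<integral>\<^sup>+\<omega>. ennreal \<bar>\<Sum>l\<in>L. coupled_X (\<omega> l)\<bar> \<partial>PiM I coupling)"
  using assms finite_subset[OF assms(2)] distr_coupled_X
  by (intro coupled.nn_integral_sum_indep_vars_eq_PiM[OF M.prob_space_axioms]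
      M.indep_vars_subset[OF indep_X]) auto

lemma nn_integral_abs_sum_A_times_J_eq_PiM:
  assumes "L \<subseteq> I" "I \<subseteq> {1..n}" "I \<noteq> {}"
  shows "(\<integral>\<^sup>+s. ennreal \<bar>\<Sum>l\<in>L. A l s * J l s\<bar> \<partial>N) = (\<integral>\<^sup>+\<omega>. ennreal \<bar>\<Sum>l\<in>L. coupled_U (\<omega> l)\<bar> \<partial>PiM I coupling)"
  using assms finite_subset[OF assms(2)] distr_coupled_U
  by (intro coupled.nn_integral_sum_indep_vars_eq_PiM[OF N.prob_space_axioms]
      N.indep_vars_subset[OF indep_A_times_J]) auto

lemma
  assumes i: "i \<in> {1..n}"
  shows integrable_coupled_X: "integrable (coupling i) coupled_X"
    and integral_coupled_X: "(\<integral>w. coupled_X w \<partial>coupling i) = 0"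
proof -
  have "integrable (distr (coupling i) borel coupled_X) (\<lambda>x. x)"
    "(\<integral>x. x \<partial>distr (coupling i) borel coupled_X) = 0"
    unfolding distr_coupled_X[OF i] using i integrable_X integral_X
    by (simp_all add: integrable_distr_eq integral_distr)
  then show "integrable (coupling i) coupled_X" "(\<integral>w. coupled_X w \<partial>coupling i) = 0"
    by (simp_all add: integrable_distr_eq integral_distr)
qed

lemma cx_le_coupled_X:
  assumes i: "i \<in> {1..<n}"
  shows "cx_le (coupling i) coupled_X (coupling (Suc i)) coupled_X"
proof -
  have "cx_le M (X i) M (X (Suc i))"
    using dil[OF i] by (simp add: dil_le_def X_def[abs_def] \<mu>_def)
  then show ?thesis
    using i distr_coupled_X[of i] distr_coupled_X[of "Suc i"] by (subst cx_le_cong_distr) auto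
qed

lemma integrable_A_times_J: "i \<in> {1..n} \<Longrightarrow> integrable N (\<lambda>s. A i s * J i s)"
proof -
  assume i: "i \<in> {1..n}"
  interpret H: prob_space "density_law (h i)" by (rule prob_space_density_law)
  have "integrable (density_law (h i)) (\<lambda>x. x)"
    using density_law_centred[of "h i"] i integrable_h_mult integral_h_mult by simp
  then have "(\<integral>\<^sup>+b. ennreal \<bar>b\<bar> \<partial>density_law (h i)) < \<infinity>"
    by (simp add: integrable_iff_bounded)
  moreover have "(\<integral>\<^sup>+w. ennreal \<bar>coupled_U w\<bar> \<partial>coupling i)
      = (\<integral>\<^sup>+(y, a, b, j). (if j then ennreal \<bar>b\<bar> else 0) \<partial>coupling i)"
    by (intro nn_integral_cong) (auto split: prod.split)
  moreover have "\<dots> = ennreal (p i) * (\<integral>\<^sup>+b. ennreal \<bar>b\<bar> \<partial>density_law (h i))"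
    using i by (subst nn_integral_coupling) (simp_all add: H.emeasure_space_1)
  ultimately have "integrable (coupling i) coupled_U"
    by (intro integrableI_bounded) (simp_all add: ennreal_mult_less_top)
  then have "integrable (distr (coupling i) borel coupled_U) (\<lambda>x. x)"
    by (simp add: integrable_distr_eq)
  then show ?thesis
    unfolding distr_coupled_U[OF i] using i by (simp add: integrable_distr_eq)
qed

lemma nn_integral_abs_sum_X:
  "L \<subseteq> {1..n} \<Longrightarrow> (\<integral>\<^sup>+s. ennreal \<bar>\<Sum>l\<in>L. X l s\<bar> \<partial>M) = ennreal (\<integral>s. \<bar>\<Sum>l\<in>L. X l s\<bar> \<partial>M)"
  by (intro nn_integral_eq_integral integrable_abs Bochner_Integration.integrable_sum integrable_X) auto

lemma nn_integral_abs_sum_A_times_J: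
  "L \<subseteq> {1..n} \<Longrightarrow>
    (\<integral>\<^sup>+s. ennreal \<bar>\<Sum>l\<in>L. A l s * J l s\<bar> \<partial>N) = ennreal (\<integral>s. \<bar>\<Sum>l\<in>L. A l s * J l s\<bar> \<partial>N)"
  by (intro nn_integral_eq_integral integrable_abs Bochner_Integration.integrable_sum integrable_A_times_J) auto

lemma integral_abs_sum_X_le_permuted:
  assumes \<tau>: "\<tau> permutes {1..n}" and "m \<le> n"
  shows "(\<integral>s. \<bar>\<Sum>i=1..m. X i s\<bar> \<partial>M) \<le> (\<integral>s. \<bar>\<Sum>i=1..m. X (\<tau> i) s\<bar> \<partial>M)"
proof -
  define L where "L = \<tau> ` {1..m}"
  have inj: "inj_on \<tau> {1..m}"
    using permutes_inj_on[OF \<tau>] .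
  have "L \<subseteq> \<tau> ` {1..n}"
    unfolding L_def using \<open>m \<le> n\<close> by (intro image_mono) auto
  then have L: "L \<subseteq> {1..n}" "card L = m"
    using card_image[OF inj] permutes_image[OF \<tau>] by (simp_all add: L_def)
  have "n \<noteq> 0" and "{1..m} \<subseteq> {1..n}"
    using n_ge_1 \<open>m \<le> n\<close> by auto
  then have "ennreal (\<integral>s. \<bar>\<Sum>i=1..m. X i s\<bar> \<partial>M)
      = (\<integral>\<^sup>+\<omega>. ennreal \<bar>\<Sum>l\<in>{1..card L}. coupled_X (\<omega> l)\<bar> \<partial>PiM {1..n} coupling)"
    by (simp add: L nn_integral_abs_sum_X[symmetric] nn_integral_abs_sum_X_eq_PiM)
  also have "\<dots> \<le> (\<integral>\<^sup>+\<omega>. ennreal \<bar>\<Sum>l\<in>L. coupled_X (\<omega> l)\<bar> \<partial>PiM {1..n} coupling)"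
    by (rule coupled.nn_integral_abs_sum_initial_le[OF _ integrable_coupled_X cx_le_coupled_X L(1)]) auto
  also have "\<dots> = ennreal (\<integral>s. \<bar>\<Sum>l\<in>L. X l s\<bar> \<partial>M)"
    using L(1) \<open>n \<noteq> 0\<close> nn_integral_abs_sum_X_eq_PiM[of L "{1..n}"] nn_integral_abs_sum_X[of L] by simp
  also have "\<dots> = ennreal (\<integral>s. \<bar>\<Sum>i=1..m. X (\<tau> i) s\<bar> \<partial>M)"
    by (simp only: L_def sum.reindex[OF inj] comp_def)
  finally show ?thesis
    by (simp add: ennreal_le_iff)
qed

lemma nn_integral_abs_coupled_X_pos:
  assumes i: "i \<in> {1..n}"
  shows "0 < (\<integral>\<^sup>+w. ennreal \<bar>coupled_X w\<bar> \<partial>coupling i)"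
proof (rule ccontr)
  assume "\<not> ?thesis"
  then have "(\<integral>\<^sup>+x. ennreal (f i x) * ennreal \<bar>x\<bar> \<partial>lborel) = 0"
    using nn_integral_coupled_X[OF i, of "\<lambda>x. ennreal \<bar>x\<bar>"] by simp
  then have "AE x in lborel. ennreal (f i x) * ennreal \<bar>x\<bar> = 0"
    using i by (subst (asm) nn_integral_0_iff_AE) simp_all
  then have "AE x in lborel. ennreal (f i x) = 0"
    using AE_lborel_singleton[of 0] by eventually_elim simp
  then have "(\<integral>\<^sup>+x. ennreal (f i x) \<partial>lborel) = (\<integral>\<^sup>+x. 0 \<partial>(lborel :: real measure))"
    by (rule nn_integral_cong_AE)
  then show False
    using nn_integral_f[OF i] by simp
qed

lemma integral_abs_sum_X_pos:
  assumes "1 \<le> m" "m \<le> n"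
  shows "0 < (\<integral>s. \<bar>\<Sum>i=1..m. X i s\<bar> \<partial>M)"
proof -
  have L: "finite {2..m}" "{2..m} \<subseteq> {1..n}" "1 \<in> {1..n}" "1 \<notin> {2..m}" "{1..m} \<subseteq> {1..n}"
    using assms by auto
  have "0 < (\<integral>\<^sup>+w. ennreal \<bar>coupled_X w\<bar> \<partial>coupling 1)"
    using L by (intro nn_integral_abs_coupled_X_pos) simp
  also have "\<dots> \<le> (\<integral>\<^sup>+\<omega>. ennreal \<bar>coupled_X (\<omega> 1) + (\<Sum>l\<in>{2..m}. coupled_X (\<omega> l))\<bar> \<partial>PiM {1..n} coupling)"
    using L integrable_coupled_X integral_coupled_X
    by (intro coupled.nn_integral_abs_le_nn_integral_abs_add_sum) auto
  also have "\<dots> = (\<integral>\<^sup>+\<omega>. ennreal \<bar>\<Sum>l\<in>{1..m}. coupled_X (\<omega> l)\<bar> \<partial>PiM {1..n} coupling)"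
    using \<open>1 \<le> m\<close> by (simp add: atLeastAtMost_insertL[symmetric] numeral_2_eq_2)
  also have "\<dots> = ennreal (\<integral>s. \<bar>\<Sum>i=1..m. X i s\<bar> \<partial>M)"
    using L nn_integral_abs_sum_X_eq_PiM[of "{1..m}" "{1..n}"] nn_integral_abs_sum_X[of "{1..m}"] by simp
  finally show ?thesis
    by simp
qed

lemma permutes_mem: "\<tau> permutes {1..n} \<Longrightarrow> i \<in> {1..n} \<Longrightarrow> \<tau> i \<in> {1..n}"
  by (rule permutes_in_image[THEN iffD2])

lemma measurable_wait:
  assumes \<tau>: "\<tau> permutes {1..n}" and "k \<le> Suc n"
  shows "(\<lambda>s. wait \<tau> (\<lambda>j. B j s) \<mu> k) \<in> borel_measurable M"
  using assms by (intro borel_measurable_wait) (auto intro!: B_rv permutes_mem[OF \<tau>])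

lemma integrable_sum_abs_X_permuted:
  assumes \<tau>: "\<tau> permutes {1..n}" and "k \<le> n"
  shows "integrable M (\<lambda>s. \<Sum>i=1..k. \<bar>B (\<tau> i) s - \<mu> (\<tau> i)\<bar>)"
  using assms by (intro Bochner_Integration.integrable_sum integrable_abs)
    (auto intro!: integrable_X[unfolded X_def[abs_def]] permutes_mem[OF \<tau>])

lemma integrable_wait:
  assumes \<tau>: "\<tau> permutes {1..n}" and "m \<le> n"
  shows "integrable M (\<lambda>s. wait \<tau> (\<lambda>j. B j s) \<mu> (Suc m))"
  using assms wait_le_sum_abs wait_nonneg
  by (intro Bochner_Integration.integrable_bound[OF integrable_sum_abs_X_permuted[OF \<tau>, of m]]
      measurable_wait AE_I2) (simp_all add: sum_nonneg)

lemma sum_integral_idle: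
  assumes \<tau>: "\<tau> permutes {1..n}" and "k \<le> n"
  shows "(\<Sum>i=1..k. \<integral>s. idle \<tau> (\<lambda>j. B j s) \<mu> i \<partial>M) = (\<integral>s. wait \<tau> (\<lambda>j. B j s) \<mu> k \<partial>M)"
  using \<open>k \<le> n\<close>
proof (induction k)
  case (Suc k)
  show ?case
  proof (cases k)
    case (Suc i)
    have "\<tau> (Suc i) \<in> {1..n}"
      using Suc.prems \<open>k = Suc i\<close> by (intro permutes_mem[OF \<tau>]) auto
    have "idle \<tau> (\<lambda>j. B j s) \<mu> (Suc k)
        = wait \<tau> (\<lambda>j. B j s) \<mu> (Suc k) - wait \<tau> (\<lambda>j. B j s) \<mu> k - X (\<tau> (Suc i)) s" for s
      by (simp add: \<open>k = Suc i\<close> X_def)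
    then have "(\<integral>s. idle \<tau> (\<lambda>j. B j s) \<mu> (Suc k) \<partial>M)
        = (\<integral>s. wait \<tau> (\<lambda>j. B j s) \<mu> (Suc k) \<partial>M) - (\<integral>s. wait \<tau> (\<lambda>j. B j s) \<mu> k \<partial>M)"
      using Suc.prems \<open>k = Suc i\<close> integrable_wait[OF \<tau>, of k] integrable_wait[OF \<tau>, of i]
        integrable_X[OF \<open>\<tau> (Suc i) \<in> {1..n}\<close>] integral_X[OF \<open>\<tau> (Suc i) \<in> {1..n}\<close>]
      by simp
    moreover have "(\<Sum>i=1..k. \<integral>s. idle \<tau> (\<lambda>j. B j s) \<mu> i \<partial>M) = (\<integral>s. wait \<tau> (\<lambda>j. B j s) \<mu> k \<partial>M)"
      using Suc.IH Suc.prems by simp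
    ultimately show ?thesis
      by simp
  qed simp
qed simp

lemma cost_eq:
  "\<tau> permutes {1..n} \<Longrightarrow> cost M B n \<tau> \<mu> \<omega>
    = \<omega> * (\<integral>s. wait \<tau> (\<lambda>j. B j s) \<mu> n \<partial>M) + (1 - \<omega>) * (\<Sum>k=1..n. \<integral>s. wait \<tau> (\<lambda>j. B j s) \<mu> k \<partial>M)"
  unfolding cost_def using sum_integral_idle[OF _ order_refl] by simp

lemma cost_nonneg: "0 \<le> cost M B n \<tau> \<mu> \<omega>"
  unfolding cost_def using \<omega>
  by (intro add_nonneg_nonneg mult_nonneg_nonneg sum_nonneg integral_nonneg_AE AE_I2)
     (simp_all add: idle_nonneg wait_nonneg)

lemma nn_integral_wait_id_eq_PiM:
  assumes "1 \<le> m" "m \<le> n"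
  shows "(\<integral>\<^sup>+s. ennreal (wait id (\<lambda>j. B j s) \<mu> (Suc m)) \<partial>M)
       = (\<integral>\<^sup>+\<omega>. ennreal (lindley (\<lambda>i. coupled_X (\<omega> i)) 0 1 m) \<partial>PiM {1..<1 + m} coupling)"
proof -
  have I: "{1..m} \<subseteq> {1..n}" "{1..<1 + m} = {1..m}"
    using assms by auto
  have [measurable]: "(\<lambda>v. lindley v 0 1 m) \<in> borel_measurable (PiM {1..m} (\<lambda>_. borel))"
    using borel_measurable_lindley[of 1 m "\<lambda>i v. v i" "PiM {1..m} (\<lambda>_. borel)" "\<lambda>_. 0"] by simp
  have "wait id (\<lambda>j. B j s) \<mu> (Suc m) = lindley (\<lambda>i\<in>{1..m}. X i s) 0 1 m" for s
    by (simp add: wait_id_eq_lindley X_def) (rule lindley_cong, simp)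
  then have "(\<integral>\<^sup>+s. ennreal (wait id (\<lambda>j. B j s) \<mu> (Suc m)) \<partial>M)
      = (\<integral>\<^sup>+s. ennreal (lindley (\<lambda>i\<in>{1..m}. X i s) 0 1 m) \<partial>M)"
    by simp
  also have "\<dots> = (\<integral>\<^sup>+\<omega>. ennreal (lindley (\<lambda>i\<in>{1..m}. coupled_X (\<omega> i)) 0 1 m) \<partial>PiM {1..m} coupling)"
    using I assms distr_coupled_X
    by (intro coupled.nn_integral_indep_vars_eq_PiM[OF M.prob_space_axioms _ _
          M.indep_vars_subset[OF indep_X]]) auto
  also have "\<dots> = (\<integral>\<^sup>+\<omega>. ennreal (lindley (\<lambda>i. coupled_X (\<omega> i)) 0 1 m) \<partial>PiM {1..<1 + m} coupling)"
    unfolding I(2) by (intro nn_integral_cong arg_cong[where f=ennreal] lindley_cong) simp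
  finally show ?thesis .
qed

lemma integral_wait_id_le:
  assumes "1 \<le> m" "m \<le> n"
  shows "(\<integral>s. wait id (\<lambda>j. B j s) \<mu> (Suc m) \<partial>M)
       \<le> (\<integral>s. \<bar>\<Sum>i=1..m. X i s\<bar> \<partial>M) + (\<integral>s. \<bar>\<Sum>i=1..m. A i s * J i s\<bar> \<partial>N)"
proof -
  have I: "{1..m} \<subseteq> {1..n}" "{1..<1 + m} = {1..m}" "{1..m} \<noteq> {}"
    using assms by auto
  have "ennreal (\<integral>s. wait id (\<lambda>j. B j s) \<mu> (Suc m) \<partial>M)
      = (\<integral>\<^sup>+s. ennreal (wait id (\<lambda>j. B j s) \<mu> (Suc m)) \<partial>M)"
    using integrable_wait[OF permutes_id \<open>m \<le> n\<close>] by (simp add: nn_integral_eq_integral wait_nonneg)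
  also have "\<dots> = (\<integral>\<^sup>+\<omega>. ennreal (lindley (\<lambda>i. coupled_X (\<omega> i)) 0 1 m) \<partial>PiM {1..<1 + m} coupling)"
    by (rule nn_integral_wait_id_eq_PiM[OF assms])
  also have "\<dots> \<le> (\<integral>\<^sup>+\<omega>. ennreal \<bar>0 + (\<Sum>i\<in>{1..<1 + m}. coupled_Z (\<omega> i))\<bar> \<partial>PiM {1..<1 + m} coupling)"
    using I by (intro nn_integral_lindley_le) auto
  also have "\<dots> = (\<integral>\<^sup>+\<omega>. ennreal \<bar>(\<Sum>i\<in>{1..m}. coupled_X (\<omega> i)) - (\<Sum>i\<in>{1..m}. coupled_U (\<omega> i))\<bar>
      \<partial>PiM {1..m} coupling)"
    unfolding I(2) by (simp add: coupled_Z_eq sum_subtractf)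
  also have "\<dots> \<le> (\<integral>\<^sup>+\<omega>. ennreal \<bar>\<Sum>i\<in>{1..m}. coupled_X (\<omega> i)\<bar> \<partial>PiM {1..m} coupling)
      + (\<integral>\<^sup>+\<omega>. ennreal \<bar>\<Sum>i\<in>{1..m}. coupled_U (\<omega> i)\<bar> \<partial>PiM {1..m} coupling)"
    by (rule nn_integral_abs_diff_le) simp_all
  also have "\<dots> = ennreal (\<integral>s. \<bar>\<Sum>i=1..m. X i s\<bar> \<partial>M) + ennreal (\<integral>s. \<bar>\<Sum>i=1..m. A i s * J i s\<bar> \<partial>N)"
    using I by (simp add: nn_integral_abs_sum_X_eq_PiM[symmetric] nn_integral_abs_sum_A_times_J_eq_PiM[symmetric]
        nn_integral_abs_sum_X nn_integral_abs_sum_A_times_J)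
  finally show ?thesis
    by (simp add: ennreal_plus[symmetric] del: ennreal_plus)
qed

lemma integral_abs_sum_X_le_wait:
  assumes \<tau>: "\<tau> permutes {1..n}" and "m \<le> n"
  shows "(\<integral>s. \<bar>\<Sum>i=1..m. X i s\<bar> \<partial>M) / 2 \<le> (\<integral>s. wait \<tau> (\<lambda>j. B j s) \<mu> (Suc m) \<partial>M)"
proof -
  let ?S = "\<lambda>s. \<Sum>i=1..m. X (\<tau> i) s"
  have \<tau>_mem: "\<And>i. i \<in> {1..m} \<Longrightarrow> \<tau> i \<in> {1..n}"
    using \<open>m \<le> n\<close> by (intro permutes_mem[OF \<tau>]) auto
  have int: "integrable M ?S"
    using \<tau>_mem by (intro Bochner_Integration.integrable_sum integrable_X)
  have mean: "(\<integral>s. ?S s \<partial>M) = 0"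
    using \<tau>_mem integrable_X integral_X by (simp add: integral_sum)
  have pos_part: "(\<bar>?S s\<bar> + ?S s) / 2 \<le> wait \<tau> (\<lambda>j. B j s) \<mu> (Suc m)" for s
    using sum_le_wait[of "\<lambda>j. B j s" \<tau> \<mu> m] wait_nonneg[of \<tau> "\<lambda>j. B j s" \<mu> "Suc m"]
    by (simp add: X_def abs_if)
  have "(\<integral>s. \<bar>\<Sum>i=1..m. X i s\<bar> \<partial>M) / 2 \<le> (\<integral>s. \<bar>?S s\<bar> \<partial>M) / 2"
    using integral_abs_sum_X_le_permuted[OF assms] by simp
  also have "\<dots> = (\<integral>s. (\<bar>?S s\<bar> + ?S s) / 2 \<partial>M)"
    using int mean by simp
  also have "\<dots> \<le> (\<integral>s. wait \<tau> (\<lambda>j. B j s) \<mu> (Suc m) \<partial>M)"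
    using int integrable_wait[OF assms] pos_part by (intro integral_mono) auto
  finally show ?thesis .
qed

lemma integral_wait_id_le_wait:
  assumes \<tau>: "\<tau> permutes {1..n}" and k: "k \<in> {1..n}" and "0 \<le> R"
    and R: "\<And>m. m \<in> {1..n} \<Longrightarrow>
      (\<integral>s. \<bar>\<Sum>i=1..m. A i s * J i s\<bar> \<partial>N) \<le> R * (\<integral>s. \<bar>\<Sum>i=1..m. X i s\<bar> \<partial>M)"
  shows "(\<integral>s. wait id (\<lambda>j. B j s) \<mu> k \<partial>M) \<le> (2 + 2 * R) * (\<integral>s. wait \<tau> (\<lambda>j. B j s) \<mu> k \<partial>M)"
proof -
  obtain m where m: "k = Suc m" "m < n"
    using k by (cases k) auto
  show ?thesis
  proof (cases "m = 0")
    case False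
    then have "m \<in> {1..n}" using m by auto
    let ?E = "\<integral>s. \<bar>\<Sum>i=1..m. X i s\<bar> \<partial>M"
    have "(\<integral>s. wait id (\<lambda>j. B j s) \<mu> k \<partial>M) \<le> ?E + R * ?E"
      using integral_wait_id_le[of m] R[of m] \<open>m \<in> {1..n}\<close> m by simp
    also have "\<dots> = (2 + 2 * R) * (?E / 2)"
      by (simp add: algebra_simps)
    also have "\<dots> \<le> (2 + 2 * R) * (\<integral>s. wait \<tau> (\<lambda>j. B j s) \<mu> k \<partial>M)"
      using integral_abs_sum_X_le_wait[OF \<tau>, of m] m \<open>0 \<le> R\<close> by (intro mult_left_mono) auto
    finally show ?thesis .
  qed (simp add: m)
qed

lemma cost_id_le:
  assumes \<tau>: "\<tau> permutes {1..n}" and "0 \<le> R"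
    and R: "\<And>m. m \<in> {1..n} \<Longrightarrow>
      (\<integral>s. \<bar>\<Sum>i=1..m. A i s * J i s\<bar> \<partial>N) \<le> R * (\<integral>s. \<bar>\<Sum>i=1..m. X i s\<bar> \<partial>M)"
  shows "cost M B n id \<mu> \<omega> \<le> (2 + 2 * R) * cost M B n \<tau> \<mu> \<omega>"
proof -
  let ?W = "\<lambda>\<sigma> k. \<integral>s. wait \<sigma> (\<lambda>j. B j s) \<mu> k \<partial>M"
  have slot: "?W id k \<le> (2 + 2 * R) * ?W \<tau> k" if "k \<in> {1..n}" for k
    using integral_wait_id_le_wait[OF \<tau> that \<open>0 \<le> R\<close> R] .
  have "cost M B n id \<mu> \<omega> = \<omega> * ?W id n + (1 - \<omega>) * (\<Sum>k=1..n. ?W id k)"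
    by (rule cost_eq[OF permutes_id])
  also have "\<dots> \<le> \<omega> * ((2 + 2 * R) * ?W \<tau> n) + (1 - \<omega>) * (\<Sum>k=1..n. (2 + 2 * R) * ?W \<tau> k)"
    using \<omega> n_ge_1 slot by (intro add_mono mult_left_mono sum_mono) auto
  also have "\<dots> = (2 + 2 * R) * cost M B n \<tau> \<mu> \<omega>"
    by (simp add: cost_eq[OF \<tau>] algebra_simps sum_distrib_left)
  finally show ?thesis .
qed

end

theorem theorem3p4:
  fixes M :: "'a measure" and N :: "'b measure"
    and B :: "nat \<Rightarrow> 'a \<Rightarrow> real" and n :: nat and \<omega> :: real
    and \<mu> :: "nat \<Rightarrow> real" and f g h :: "nat \<Rightarrow> real \<Rightarrow> real" and p :: "nat \<Rightarrow> real"
    and A J :: "nat \<Rightarrow> 'b \<Rightarrow> real"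
  assumes "prob_space M"
    and "n \<ge> 1"
    and B_rv: "\<And>i. i \<in> {1..n} \<Longrightarrow> B i \<in> borel_measurable M"
    and B_indep: "prob_space.indep_vars M (\<lambda>_. borel) B {1..n}"
    and B_mean: "\<And>i. i \<in> {1..n} \<Longrightarrow> integrable M (B i)"
    and B_var: "\<And>i. i \<in> {1..n} \<Longrightarrow> integrable M (\<lambda>s. (B i s)\<^sup>2)"
    and \<mu>_def: "\<And>i. \<mu> i = (\<integral>s. B i s \<partial>M)"
    and \<omega>: "0 < \<omega>" "\<omega> < 1"
    and dil: "\<And>i. i \<in> {1..<n} \<Longrightarrow> dil_le M (B i) M (B (Suc i))"
    and f_nonneg: "\<And>i x. i \<in> {1..n} \<Longrightarrow> 0 \<le> f i x"
    and f_meas: "\<And>i. i \<in> {1..n} \<Longrightarrow> f i \<in> borel_measurable borel"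
    and f_dens: "\<And>i. i \<in> {1..n} \<Longrightarrow>
        distributed M lborel (\<lambda>s. B i s - \<mu> i) (\<lambda>x. ennreal (f i x))"
    and g_def: "\<And>i x. g i x = min (f i x) (f i (- x))"
    and h_def: "\<And>i x. h i x = f i x - g i x"
    and p_def: "\<And>i. p i = (\<integral>x. h i x \<partial>lborel)"
    and "prob_space N"
    and AJ_rv: "\<And>i. i \<in> {1..n} \<Longrightarrow> A i \<in> borel_measurable N \<and> J i \<in> borel_measurable N"
    and AJ_indep: "prob_space.indep_vars N (\<lambda>_. borel) (\<lambda>i s. (A i s, J i s)) {1..n}"
    and A_J_indep: "\<And>i. i \<in> {1..n} \<Longrightarrow> prob_space.indep_var N borel (A i) borel (J i)"
    and A_dens: "\<And>i. i \<in> {1..n} \<Longrightarrow> p i > 0 \<Longrightarrow>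
        distributed N lborel (A i) (\<lambda>x. ennreal (h i x / p i))"
    and J_bern: "\<And>i. i \<in> {1..n} \<Longrightarrow> (AE s in N. J i s = 0 \<or> J i s = 1)"
    and J_prob: "\<And>i. i \<in> {1..n} \<Longrightarrow> measure N {s \<in> space N. J i s = 1} = p i"
  shows "cost M B n id \<mu> \<omega> / Min ((\<lambda>\<tau>. cost M B n \<tau> \<mu> \<omega>) ` {\<tau>. \<tau> permutes {1..n}})
         \<le> 2 + 2 * Max ((\<lambda>k. (\<integral>s. \<bar>\<Sum>i=1..k. A i s * J i s\<bar> \<partial>N)
                             / (\<integral>s. \<bar>\<Sum>i=1..k. B i s - \<mu> i\<bar> \<partial>M)) ` {1..n})"
proof -
  interpret appointment_model M N B n \<omega> \<mu> f g h p A J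
    using assms by (simp add: appointment_model_def appointment_model_axioms_def)
  define r where "r k = (\<integral>s. \<bar>\<Sum>i=1..k. A i s * J i s\<bar> \<partial>N) / (\<integral>s. \<bar>\<Sum>i=1..k. X i s\<bar> \<partial>M)" for k
  define R where "R = Max (r ` {1..n})"
  have r_le_R: "r k \<le> R" if "k \<in> {1..n}" for k
    unfolding R_def using that by simp
  have R: "(\<integral>s. \<bar>\<Sum>i=1..k. A i s * J i s\<bar> \<partial>N) \<le> R * (\<integral>s. \<bar>\<Sum>i=1..k. X i s\<bar> \<partial>M)"
    if "k \<in> {1..n}" for k
    using r_le_R[OF that] integral_abs_sum_X_pos[of k] that by (simp add: r_def divide_le_eq)
  have "0 \<le> r 1"
    unfolding r_def by simp
  then have "0 \<le> R"
    using r_le_R[of 1] n_ge_1 by simp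
  have "cost M B n id \<mu> \<omega> \<le> (2 + 2 * R) * cost M B n \<tau> \<mu> \<omega>" if "\<tau> permutes {1..n}" for \<tau>
    using cost_id_le[OF that \<open>0 \<le> R\<close> R] .
  moreover have "{\<tau>. \<tau> permutes {1..n}} \<noteq> {}"
    using permutes_id by blast
  ultimately have "cost M B n id \<mu> \<omega> / Min ((\<lambda>\<tau>. cost M B n \<tau> \<mu> \<omega>) ` {\<tau>. \<tau> permutes {1..n}}) \<le> 2 + 2 * R"
    using \<open>0 \<le> R\<close> by (intro divide_Min_le) (simp_all add: finite_permutations cost_nonneg)
  then show ?thesis
    by (simp add: R_def r_def X_def)
qed

end
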